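(* Let $\Gamma$ and $\Gamma'$ be LJB-contexts such that $\Gamma\longrightarrow\Gamma'$ by one step of the cleaning rewrite system, and let $A$ be a formula. Let $\Delta\vdash E$ be a flattening of the LJB-sequent $\Gamma\vdash A$ and $\Delta'\vdash E'$ be a flattening of $\Gamma'\vdash A$. Then $\Delta\vdash E$ has a derivation in LJ$^{+}$ if and only if $\Delta'\vdash E'$ has a derivation in LJ$^{+}$, and the derivations have the same height.
   Context: Minimal predicate logic: terms $t ::= x \mid f(t_1,\dots,t_n)$, formulas $A ::= P(t_1,\dots,t_n)\mid A\rightarrow A\mid \forall x\,A$. LJ$^{+}$-sequents $\Delta\vdash E$: $\Delta$ a finite multiset of formulas. LJ$^{+}$ is the sequent calculus (formulas modulo $\alpha$-equivalence) with rules: (L$\rightarrow$) from $\Delta, A_1\rightarrow\dots\rightarrow A_n\rightarrow P\vdash A_i$ ($i=1,\dots,n$, $n\ge0$) infer $\Delta, A_1\rightarrow\dots\rightarrow A_n\rightarrow P\vdash P$, $P$ atomic; (R$\forall$) from $\Delta\vdash A$ infer $\Delta\vdash\forall x\,A$ if $x$ is not free in $\Delta$; (R$\rightarrow$) from $\Delta,A\vdash B$ infer $\Delta\vdash A\rightarrow B$. Height = maximal number of rule instances on a branch. LJB-contexts and items: an LJB-context is a finite multiset of items; an item is a formula or $[\Gamma]_V$ with $V$ a finite set of variables (bound by the bracket) and $\Gamma$ an LJB-context. $FV([\Gamma]_V)=FV(\Gamma)\setminus V$, $BV([\Gamma]_V)=BV(\Gamma)\cup V$, $FV$, $BV$ of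 a context being the unions over its items and of a formula the usual ones. An LJB-sequent $\Gamma\vdash A$ is an LJB-context and a formula. Cleaning rules (applicable anywhere in a context, contexts being multisets): $[I,\Gamma]_V\longrightarrow I,[\Gamma]_V$ if $FV(I)\cap V=\emptyset$; $[\ ]_V\longrightarrow\emptyset$; $I\,I\longrightarrow I$. A fresh $\alpha$-variant of an LJB-sequent is an LJB-sequent $\alpha$-equivalent to it (renaming variables bound by quantifiers or by brackets) in which all bound variables are pairwise distinct and distinct from the free variables. An LJ$^{+}$-sequent is a flattening of an LJB-sequent if it is obtained by erasing all brackets (keeping their contents) in a fresh $\alpha$-variant of it. *)

theory Defs
  imports Main "HOL-Library.Multiset" "HOL-Library.FSet"
begin

type_synonym var = nat

datatype trm = Var var | Fn nat "trm list"

datatype fm = Pred nat "trm list" | Imp fm fm | All var fm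

primrec fv_trm :: "trm \<Rightarrow> var set" where
  "fv_trm (Var x) = {x}"
| "fv_trm (Fn f ts) = \<Union> (set (map fv_trm ts))"

primrec fv_fm :: "fm \<Rightarrow> var set" where
  "fv_fm (Pred p ts) = \<Union> (set (map fv_trm ts))"
| "fv_fm (Imp A B) = fv_fm A \<union> fv_fm B"
| "fv_fm (All x A) = fv_fm A - {x}"

primrec bv_fm :: "fm \<Rightarrow> var multiset" where
  "bv_fm (Pred p ts) = {#}"
| "bv_fm (Imp A B) = bv_fm A + bv_fm B"
| "bv_fm (All x A) = add_mset x (bv_fm A)"

definition fv_mset :: "fm multiset \<Rightarrow> var set" where
  "fv_mset \<Delta> = \<Union> (fv_fm ` set_mset \<Delta>)"

fun imps :: "fm list \<Rightarrow> fm \<Rightarrow> fm" where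
  "imps [] P = P"
| "imps (A # As) P = Imp A (imps As P)"

text \<open>Each layer is the graph of a bijection between the variables bound by two
  corresponding binders (a quantifier, or a bracket binding a set of variables).\<close>
fun var_eq :: "(var \<times> var) set list \<Rightarrow> var \<Rightarrow> var \<Rightarrow> bool" where
  "var_eq [] x y = (x = y)"
| "var_eq (R # Rs) x y =
     (if x \<in> Domain R \<or> y \<in> Range R then (x, y) \<in> R else var_eq Rs x y)"

inductive alpha_trm :: "(var \<times> var) set list \<Rightarrow> trm \<Rightarrow> trm \<Rightarrow> bool" where
  "var_eq Rs x y \<Longrightarrow> alpha_trm Rs (Var x) (Var y)"
| "length ts = length ss \<Longrightarrow> (\<forall>i<length ts. alpha_trm Rs (ts ! i) (ss ! i))
    \<Longrightarrow> alpha_trm Rs (Fn f ts) (Fn f ss)"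

inductive alpha_fm :: "(var \<times> var) set list \<Rightarrow> fm \<Rightarrow> fm \<Rightarrow> bool" where
  "length ts = length ss \<Longrightarrow> (\<forall>i<length ts. alpha_trm Rs (ts ! i) (ss ! i))
    \<Longrightarrow> alpha_fm Rs (Pred p ts) (Pred p ss)"
| "alpha_fm Rs A C \<Longrightarrow> alpha_fm Rs B D \<Longrightarrow> alpha_fm Rs (Imp A B) (Imp C D)"
| "alpha_fm ({(x, y)} # Rs) A B \<Longrightarrow> alpha_fm Rs (All x A) (All y B)"

text \<open>\<open>lj \<Delta> E h\<close>: the sequent \<open>\<Delta> \<turnstile> E\<close> has an LJ+-derivation of height \<open>h\<close>.
  Formulas are treated modulo alpha-equivalence: the principal formula of (L\<rightarrow>) may be
  any alpha-variant of the context formula, and the conclusions of (R\<forall>), (R\<rightarrow>) may be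
  any alpha-variants of the displayed formulas.\<close>
inductive lj :: "fm multiset \<Rightarrow> fm \<Rightarrow> nat \<Rightarrow> bool" where
  L_imp: "F \<in># \<Delta> \<Longrightarrow> alpha_fm [] F (imps As (Pred p ts)) \<Longrightarrow> length hs = length As
    \<Longrightarrow> (\<forall>i<length As. lj \<Delta> (As ! i) (hs ! i))
    \<Longrightarrow> lj \<Delta> (Pred p ts) (Suc (Max (insert 0 (set hs))))"
| R_all: "lj \<Delta> A n \<Longrightarrow> x \<notin> fv_mset \<Delta> \<Longrightarrow> alpha_fm [] B (All x A) \<Longrightarrow> lj \<Delta> B (Suc n)"
| R_imp: "lj (add_mset A \<Delta>) B n \<Longrightarrow> alpha_fm [] C (Imp A B) \<Longrightarrow> lj \<Delta> C (Suc n)"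

datatype item = Fm fm | Brk "var fset" "item multiset"

type_synonym ljb_ctx = "item multiset"

primrec fv_item :: "item \<Rightarrow> var set" where
  "fv_item (Fm A) = fv_fm A"
| "fv_item (Brk V \<Gamma>) = \<Union> (set_mset (image_mset fv_item \<Gamma>)) - fset V"

primrec bv_item :: "item \<Rightarrow> var multiset" where
  "bv_item (Fm A) = bv_fm A"
| "bv_item (Brk V \<Gamma>) = mset_set (fset V) + sum_mset (image_mset bv_item \<Gamma>)"

definition fv_ctx :: "ljb_ctx \<Rightarrow> var set" where
  "fv_ctx \<Gamma> = \<Union> (fv_item ` set_mset \<Gamma>)"

definition bv_ctx :: "ljb_ctx \<Rightarrow> var multiset" where
  "bv_ctx \<Gamma> = sum_mset (image_mset bv_item \<Gamma>)"

primrec flat_item :: "item \<Rightarrow> fm multiset" where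
  "flat_item (Fm A) = {#A#}"
| "flat_item (Brk V \<Gamma>) = sum_mset (image_mset flat_item \<Gamma>)"

definition flat_ctx :: "ljb_ctx \<Rightarrow> fm multiset" where
  "flat_ctx \<Gamma> = sum_mset (image_mset flat_item \<Gamma>)"

inductive clean1 :: "ljb_ctx \<Rightarrow> ljb_ctx \<Rightarrow> bool" where
  push_out: "fv_item I \<inter> fset V = {} \<Longrightarrow>
     clean1 (add_mset (Brk V (add_mset I \<Gamma>)) \<Xi>) (add_mset I (add_mset (Brk V \<Gamma>) \<Xi>))"
| empty_brk: "clean1 (add_mset (Brk V {#}) \<Xi>) \<Xi>"
| dup: "clean1 (add_mset I (add_mset I \<Xi>)) (add_mset I \<Xi>)"
| inside: "clean1 \<Gamma> \<Gamma>' \<Longrightarrow> clean1 (add_mset (Brk V \<Gamma>) \<Xi>) (add_mset (Brk V \<Gamma>') \<Xi>)"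

inductive alpha_item :: "(var \<times> var) set list \<Rightarrow> item \<Rightarrow> item \<Rightarrow> bool" where
  "alpha_fm Rs A B \<Longrightarrow> alpha_item Rs (Fm A) (Fm B)"
| "bij_betw f (fset V) (fset W) \<Longrightarrow> length xs = length ys
    \<Longrightarrow> (\<forall>i<length xs. alpha_item ((\<lambda>x. (x, f x)) ` fset V # Rs) (xs ! i) (ys ! i))
    \<Longrightarrow> alpha_item Rs (Brk V (mset xs)) (Brk W (mset ys))"

definition alpha_ctx :: "ljb_ctx \<Rightarrow> ljb_ctx \<Rightarrow> bool" where
  "alpha_ctx \<Gamma> \<Gamma>0 \<longleftrightarrow> (\<exists>xs ys. mset xs = \<Gamma> \<and> mset ys = \<Gamma>0 \<and> list_all2 (alpha_item []) xs ys)"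

definition fresh_variant :: "ljb_ctx \<Rightarrow> fm \<Rightarrow> ljb_ctx \<Rightarrow> fm \<Rightarrow> bool" where
  "fresh_variant \<Gamma> A \<Gamma>0 A0 \<longleftrightarrow>
     alpha_ctx \<Gamma> \<Gamma>0 \<and> alpha_fm [] A A0 \<and>
     (\<forall>x. count (bv_ctx \<Gamma>0 + bv_fm A0) x \<le> 1) \<and>
     set_mset (bv_ctx \<Gamma>0 + bv_fm A0) \<inter> (fv_ctx \<Gamma>0 \<union> fv_fm A0) = {}"

definition flattening :: "fm multiset \<Rightarrow> fm \<Rightarrow> ljb_ctx \<Rightarrow> fm \<Rightarrow> bool" where
  "flattening \<Delta> E \<Gamma> A \<longleftrightarrow> (\<exists>\<Gamma>0. fresh_variant \<Gamma> A \<Gamma>0 E \<and> \<Delta> = flat_ctx \<Gamma>0)"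

end

theory Submission
  imports Defs
begin

text \<open>Two fresh alpha-variants of one LJB-context flatten to contexts that rename into each other
  by renamings fixing all free variables, and LJ+ derivations survive such renamings, together with
  weakening and contraction, without changing their height.  A cleaning step on \<open>\<Gamma>\<close> lifts to
  the fresh variant of \<open>\<Gamma>\<close>: pushing an item out of a bracket or deleting an empty bracket does not
  change the flattening, and merging duplicates deletes one of two alpha-variants whose flattening
  is renamed into that of the other by a renaming of bracket-bound variables only.  The cleaned
  variant is again fresh and alpha-equivalent to the fresh variant of \<open>\<Gamma>'\<close>.\<close>

lemma finite_fv_trm: "finite (fv_trm t)"
  by (induction t) auto

lemma finite_fv_fm: "finite (fv_fm A)"
  by (induction A) (auto simp: finite_fv_trm)

lemma finite_fv_mset: "finite (fv_mset \<Delta>)"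
  unfolding fv_mset_def by (simp add: finite_fv_fm)

lemma ex_list_all2: "(\<And>x. x \<in> set xs \<Longrightarrow> \<exists>y. P x y) \<Longrightarrow> \<exists>ys. list_all2 P xs ys"
  by (induction xs) auto

inductive rel_trm :: "(var \<Rightarrow> var \<Rightarrow> bool) \<Rightarrow> trm \<Rightarrow> trm \<Rightarrow> bool" for V where
  Var: "V x y \<Longrightarrow> rel_trm V (Var x) (Var y)"
| Fn: "list_all2 (rel_trm V) ts ss \<Longrightarrow> rel_trm V (Fn f ts) (Fn f ss)"

inductive_cases rel_trm_VarE: "rel_trm V (Var x) s"
inductive_cases rel_trm_FnE: "rel_trm V (Fn f ts) s"

lemma rel_trm_mono:
  assumes "rel_trm V t s" and "\<And>x y. x \<in> fv_trm t \<Longrightarrow> V x y \<Longrightarrow> W x y"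
  shows "rel_trm W t s"
  using assms
proof (induction rule: rel_trm.induct)
  case (Var x y)
  then show ?case by (simp add: rel_trm.Var)
next
  case (Fn ts ss f)
  then have "list_all2 (rel_trm W) ts ss"
    by (auto elim!: list.rel_mono_strong)
  then show ?case by (rule rel_trm.Fn)
qed

lemma rel_trm_converse: "rel_trm V t s \<Longrightarrow> rel_trm V\<inverse>\<inverse> s t"
proof (induction rule: rel_trm.induct)
  case (Fn ts ss f)
  then have "list_all2 (rel_trm V\<inverse>\<inverse>) ss ts"
    by (simp add: list_all2_conv_all_nth conversep_iff[abs_def])
  then show ?case by (rule rel_trm.Fn)
qed (simp add: rel_trm.Var)

lemma rel_trm_OO: "rel_trm V t s \<Longrightarrow> rel_trm W s u \<Longrightarrow> rel_trm (V OO W) t u"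
proof (induction arbitrary: u rule: rel_trm.induct)
  case (Var x y)
  then show ?case by (auto elim: rel_trm_VarE intro: rel_trm.Var)
next
  case (Fn ts ss f)
  from Fn.prems obtain us where "u = Fn f us" and "list_all2 (rel_trm W) ss us"
    by (auto elim: rel_trm_FnE)
  moreover from Fn.IH this(2) have "list_all2 (rel_trm (V OO W)) ts us"
    by (auto simp: list_all2_conv_all_nth)
  ultimately show ?case by (simp add: rel_trm.Fn)
qed

lemma rel_trm_ex: "(\<And>x. x \<in> fv_trm t \<Longrightarrow> \<exists>y. V x y) \<Longrightarrow> \<exists>s. rel_trm V t s"
proof (induction t)
  case (Var x)
  then show ?case by (auto intro: rel_trm.Var)
next
  case (Fn f ts)
  then have "\<exists>ss. list_all2 (rel_trm V) ts ss"
    by (intro ex_list_all2 Fn.IH Fn.prems) auto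
  then show ?case by (auto intro: rel_trm.Fn)
qed

lemma rel_trm_right_unique:
  assumes "right_unique V"
  shows "right_unique (rel_trm V)"
proof (rule right_uniqueI)
  fix t s u
  assume "rel_trm V t s" "rel_trm V t u"
  then show "s = u"
  proof (induction arbitrary: u rule: rel_trm.induct)
    case (Var x y)
    then show ?case using assms by (auto elim: rel_trm_VarE dest: right_uniqueD)
  next
    case (Fn ts ss f)
    from Fn.prems obtain us where "u = Fn f us" and "list_all2 (rel_trm V) ts us"
      by (auto elim: rel_trm_FnE)
    moreover from Fn.IH this(2) have "ss = us"
      by (auto simp: list_all2_conv_all_nth intro!: nth_equalityI)
    ultimately show ?case by simp
  qed
qed

lemma rel_trm_fv: "rel_trm V t s \<Longrightarrow> x \<in> fv_trm t \<Longrightarrow> \<exists>y\<in>fv_trm s. V x y"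
proof (induction rule: rel_trm.induct)
  case (Fn ts ss f)
  then obtain i where "i < length ts" "x \<in> fv_trm (ts ! i)"
    by (auto simp: in_set_conv_nth)
  with Fn.IH show ?case
    by (fastforce simp: list_all2_conv_all_nth)
qed simp

lemma rel_trm_refl: "(\<And>x. x \<in> fv_trm t \<Longrightarrow> V x x) \<Longrightarrow> rel_trm V t t"
proof (induction t)
  case (Var x)
  then show ?case by (simp add: rel_trm.Var)
next
  case (Fn f ts)
  then have "list_all2 (rel_trm V) ts ts"
    by (auto intro!: list.rel_refl_strong)
  then show ?case by (rule rel_trm.Fn)
qed

lemma list_all2_rel_trm_mono:
  assumes "list_all2 (rel_trm V) ts ss"
    and "\<And>x y. x \<in> fv_fm (Pred p ts) \<Longrightarrow> V x y \<Longrightarrow> W x y"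
  shows "list_all2 (rel_trm W) ts ss"
  by (rule list.rel_mono_strong[OF assms(1)], erule rel_trm_mono) (use assms(2) in auto)

section \<open>Alpha-equivalence relative to a renaming of the free variables\<close>

abbreviation graph_on :: "var set \<Rightarrow> (var \<Rightarrow> var) \<Rightarrow> (var \<times> var) set" where
  "graph_on V f \<equiv> (\<lambda>x. (x, f x)) ` V"

lemma in_graph_on_iff [simp]: "(x, y) \<in> graph_on V f \<longleftrightarrow> x \<in> V \<and> y = f x"
  by auto

lemma Domain_graph_on [simp]: "Domain (graph_on V f) = V"
  by (simp add: Domain_fst image_image)

lemma Range_graph_on [simp]: "Range (graph_on V f) = f ` V"
  by (simp add: Range_snd image_image)

abbreviation stack_dom :: "(var \<times> var) set list \<Rightarrow> var set" where
  "stack_dom Rs \<equiv> \<Union> (Domain ` set Rs)"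

abbreviation stack_ran :: "(var \<times> var) set list \<Rightarrow> var set" where
  "stack_ran Rs \<equiv> \<Union> (Range ` set Rs)"

text \<open>\<open>var_rel \<rho> Rs\<close> and \<open>alpha_rel \<rho> Rs\<close> generalise \<open>var_eq Rs\<close> and \<open>alpha_fm Rs\<close>: variables
  bound by no layer of the stack are related by \<open>\<rho>\<close> instead of by equality.\<close>

fun var_rel :: "(var \<times> var) set \<Rightarrow> (var \<times> var) set list \<Rightarrow> var \<Rightarrow> var \<Rightarrow> bool" where
  "var_rel \<rho> [] x y \<longleftrightarrow> (x, y) \<in> \<rho>"
| "var_rel \<rho> (R # Rs) x y \<longleftrightarrow>
     (if x \<in> Domain R \<or> y \<in> Range R then (x, y) \<in> R else var_rel \<rho> Rs x y)"

inductive alpha_rel :: "(var \<times> var) set \<Rightarrow> (var \<times> var) set list \<Rightarrow> fm \<Rightarrow> fm \<Rightarrow> bool"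
  for \<rho> where
  Pred: "list_all2 (rel_trm (var_rel \<rho> Rs)) ts ss \<Longrightarrow> alpha_rel \<rho> Rs (Pred p ts) (Pred p ss)"
| Imp: "alpha_rel \<rho> Rs A C \<Longrightarrow> alpha_rel \<rho> Rs B D \<Longrightarrow> alpha_rel \<rho> Rs (Imp A B) (Imp C D)"
| All: "alpha_rel \<rho> ({(x, y)} # Rs) A B \<Longrightarrow> alpha_rel \<rho> Rs (All x A) (All y B)"

inductive_cases alpha_rel_PredE: "alpha_rel \<rho> Rs (Pred p ts) C"
inductive_cases alpha_rel_ImpE: "alpha_rel \<rho> Rs (Imp A B) C"
inductive_cases alpha_rel_AllE: "alpha_rel \<rho> Rs (All x A) C"

lemma var_eq_eq_var_rel_Id: "var_eq Rs x y \<longleftrightarrow> var_rel Id Rs x y"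
  by (induction Rs) auto

lemma alpha_trm_iff_rel_trm: "alpha_trm Rs t s \<longleftrightarrow> rel_trm (var_rel Id Rs) t s"
proof
  show "alpha_trm Rs t s \<Longrightarrow> rel_trm (var_rel Id Rs) t s"
    by (induction rule: alpha_trm.induct)
      (auto intro!: rel_trm.intros simp: var_eq_eq_var_rel_Id list_all2_conv_all_nth)
  show "rel_trm (var_rel Id Rs) t s \<Longrightarrow> alpha_trm Rs t s"
    by (induction rule: rel_trm.induct)
      (auto intro!: alpha_trm.intros simp: var_eq_eq_var_rel_Id list_all2_conv_all_nth)
qed

lemma alpha_fm_iff_alpha_rel_Id: "alpha_fm Rs A B \<longleftrightarrow> alpha_rel Id Rs A B"
proof
  show "alpha_fm Rs A B \<Longrightarrow> alpha_rel Id Rs A B"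
    by (induction rule: alpha_fm.induct)
      (auto intro!: alpha_rel.intros simp: alpha_trm_iff_rel_trm list_all2_conv_all_nth)
  show "alpha_rel Id Rs A B \<Longrightarrow> alpha_fm Rs A B"
    by (induction rule: alpha_rel.induct)
      (auto intro!: alpha_fm.intros simp: alpha_trm_iff_rel_trm list_all2_conv_all_nth)
qed

lemma var_rel_converse: "var_rel \<rho> Rs x y \<Longrightarrow> var_rel (\<rho>\<inverse>) (map converse Rs) y x"
  by (induction Rs) auto

lemma alpha_rel_converse: "alpha_rel \<rho> Rs A B \<Longrightarrow> alpha_rel (\<rho>\<inverse>) (map converse Rs) B A"
proof (induction rule: alpha_rel.induct)
  case (Pred Rs ts ss p)
  have "rel_trm (var_rel (\<rho>\<inverse>) (map converse Rs)) s t" if "rel_trm (var_rel \<rho> Rs) t s" for t s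
    using rel_trm_converse[OF that] by (rule rel_trm_mono) (simp add: var_rel_converse)
  with Pred have "list_all2 (rel_trm (var_rel (\<rho>\<inverse>) (map converse Rs))) ss ts"
    by (auto simp: list_all2_conv_all_nth)
  then show ?case by (rule alpha_rel.Pred)
next
  case (All x y Rs A B)
  moreover have "{(x, y)}\<inverse> = {(y, x)}" by auto
  ultimately show ?case by (simp add: alpha_rel.All)
qed (simp add: alpha_rel.Imp)

abbreviation composable :: "(var \<times> var) set list \<Rightarrow> (var \<times> var) set list \<Rightarrow> bool" where
  "composable Rs Ss \<equiv> list_all2 (\<lambda>R S. Range R = Domain S) Rs Ss"

lemma var_rel_relcomp:
  "composable Rs Ss \<Longrightarrow> var_rel \<rho> Rs x y \<Longrightarrow> var_rel \<rho>' Ss y z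
   \<Longrightarrow> var_rel (\<rho> O \<rho>') (map2 (O) Rs Ss) x z"
proof (induction arbitrary: x y z rule: list_all2_induct)
  case (Cons R Rs S Ss)
  show ?case
  proof (cases "x \<in> Domain R \<or> y \<in> Range R")
    case True
    with Cons.prems(1) have "(x, y) \<in> R" by simp
    with Cons.hyps(1) have "y \<in> Domain S" by blast
    with Cons.prems(2) have "(y, z) \<in> S" by simp
    with \<open>(x, y) \<in> R\<close> show ?thesis by auto
  next
    case False
    with Cons.hyps(1) Cons.prems have "var_rel \<rho> Rs x y" "var_rel \<rho>' Ss y z" "z \<notin> Range S"
      by (auto split: if_splits)
    with False Cons.IH show ?thesis by auto
  qed
qed auto

lemma alpha_rel_relcomp:
  "alpha_rel \<rho> Rs A B \<Longrightarrow> alpha_rel \<rho>' Ss B C \<Longrightarrow> composable Rs Ss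
   \<Longrightarrow> alpha_rel (\<rho> O \<rho>') (map2 (O) Rs Ss) A C"
proof (induction arbitrary: Ss C rule: alpha_rel.induct)
  case (Pred Rs ts ss p)
  from Pred.prems obtain us where C: "C = Pred p us" and us: "list_all2 (rel_trm (var_rel \<rho>' Ss)) ss us"
    by (auto elim: alpha_rel_PredE)
  have "rel_trm (var_rel (\<rho> O \<rho>') (map2 (O) Rs Ss)) t u"
    if "rel_trm (var_rel \<rho> Rs) t s" and "rel_trm (var_rel \<rho>' Ss) s u" for t s u
    using rel_trm_OO[OF that] by (rule rel_trm_mono) (auto intro: var_rel_relcomp[OF Pred.prems(2)])
  then have "list_all2 (rel_trm (var_rel (\<rho> O \<rho>') (map2 (O) Rs Ss))) ts us"
    using Pred.hyps us by (rule list_all2_trans)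
  then show ?case unfolding C by (rule alpha_rel.Pred)
next
  case (Imp Rs A C' B D)
  then show ?case by (auto elim!: alpha_rel_ImpE intro!: alpha_rel.Imp)
next
  case (All x y Rs A B)
  from All.prems(1) obtain z C' where C: "C = All z C'" and C': "alpha_rel \<rho>' ({(y, z)} # Ss) B C'"
    by (auto elim: alpha_rel_AllE)
  from All.prems(2) have "composable ({(x, y)} # Rs) ({(y, z)} # Ss)" by simp
  with C' have "alpha_rel (\<rho> O \<rho>') (map2 (O) ({(x, y)} # Rs) ({(y, z)} # Ss)) A C'"
    by (rule All.IH)
  moreover have "{(x, y)} O {(y, z)} = {(x, z)}" by auto
  ultimately show ?case unfolding C by (auto intro: alpha_rel.All)
qed

lemma var_rel_fv: "var_rel \<rho> Rs x y \<Longrightarrow> x \<notin> stack_dom Rs \<Longrightarrow> (x, y) \<in> \<rho> \<and> y \<notin> stack_ran Rs"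
  by (induction Rs) (auto split: if_splits)

lemma alpha_rel_fv:
  "alpha_rel \<rho> Rs A B \<Longrightarrow> x \<in> fv_fm A \<Longrightarrow> x \<notin> stack_dom Rs
   \<Longrightarrow> \<exists>y\<in>fv_fm B. (x, y) \<in> \<rho> \<and> y \<notin> stack_ran Rs"
proof (induction arbitrary: x rule: alpha_rel.induct)
  case (Pred Rs ts ss p)
  then obtain i where i: "i < length ts" "x \<in> fv_trm (ts ! i)"
    by (auto simp: in_set_conv_nth)
  with Pred.hyps have "rel_trm (var_rel \<rho> Rs) (ts ! i) (ss ! i)" "i < length ss"
    by (auto simp: list_all2_conv_all_nth)
  with i obtain y where y: "y \<in> fv_trm (ss ! i)" "var_rel \<rho> Rs x y"
    by (blast dest: rel_trm_fv)
  from var_rel_fv[OF y(2) Pred.prems(2)] have "(x, y) \<in> \<rho> \<and> y \<notin> stack_ran Rs" .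
  moreover from y(1) have "y \<in> fv_fm (Pred p ss)"
    using nth_mem[OF \<open>i < length ss\<close>] by auto
  ultimately show ?case by blast
next
  case (Imp Rs A C B D)
  from Imp.prems(1) consider "x \<in> fv_fm A" | "x \<in> fv_fm B" by auto
  then show ?case
  proof cases
    case 1
    with Imp.prems(2) obtain y where "y \<in> fv_fm C" "(x, y) \<in> \<rho> \<and> y \<notin> stack_ran Rs"
      using Imp.IH(1) by blast
    then show ?thesis by auto
  next
    case 2
    with Imp.prems(2) obtain y where "y \<in> fv_fm D" "(x, y) \<in> \<rho> \<and> y \<notin> stack_ran Rs"
      using Imp.IH(2) by blast
    then show ?thesis by auto
  qed
next
  case (All x' y' Rs A B)
  from All.prems have "x \<in> fv_fm A" "x \<notin> stack_dom ({(x', y')} # Rs)" by auto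
  then obtain y where "y \<in> fv_fm B" "(x, y) \<in> \<rho>" "y \<notin> stack_ran ({(x', y')} # Rs)"
    using All.IH by blast
  then show ?case by auto
qed

lemma var_rel_mono:
  "var_rel \<rho> Rs x y \<Longrightarrow> (x \<notin> stack_dom Rs \<Longrightarrow> (x, y) \<in> \<rho> \<Longrightarrow> (x, y) \<in> \<rho>') \<Longrightarrow> var_rel \<rho>' Rs x y"
  by (induction Rs) auto

lemma var_rel_append_bound:
  "x \<notin> stack_dom Qs \<Longrightarrow> x \<in> Domain R
   \<Longrightarrow> var_rel \<rho> (Qs @ R # Rs) x y \<longleftrightarrow> (x, y) \<in> R \<and> y \<notin> stack_ran Qs"
  by (induction Qs) auto

text \<open>A variable bound inside \<open>A\<close> is related in the same way whatever lies below its binder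
  in the stack, so \<open>alpha_rel\<close> only depends on how the free variables of \<open>A\<close> are related.\<close>

lemma alpha_rel_rescope:
  assumes "alpha_rel \<rho> Rs A B"
    and "\<And>Qs x y. x \<in> fv_fm A \<Longrightarrow> x \<notin> stack_dom Qs
           \<Longrightarrow> var_rel \<rho> (Qs @ Rs) x y \<Longrightarrow> var_rel \<rho>' (Qs @ Rs') x y"
  shows "alpha_rel \<rho>' Rs' A B"
  using assms
proof (induction arbitrary: Rs' rule: alpha_rel.induct)
  case (Pred Rs ts ss p)
  have "var_rel \<rho>' Rs' x y" if "x \<in> fv_fm (Pred p ts)" and "var_rel \<rho> Rs x y" for x y
  proof -
    have "var_rel \<rho>' ([] @ Rs') x y"
      using that by (intro Pred.prems) simp_all
    then show ?thesis by simp
  qed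
  with Pred.hyps have "list_all2 (rel_trm (var_rel \<rho>' Rs')) ts ss"
    by (rule list_all2_rel_trm_mono)
  then show ?case by (rule alpha_rel.Pred)
next
  case (Imp Rs A C B D)
  have "alpha_rel \<rho>' Rs' A C"
    by (rule Imp.IH(1), rule Imp.prems) simp_all
  moreover have "alpha_rel \<rho>' Rs' B D"
    by (rule Imp.IH(2), rule Imp.prems) simp_all
  ultimately show ?case by (rule alpha_rel.Imp)
next
  case (All x y Rs A B)
  have "alpha_rel \<rho>' ({(x, y)} # Rs') A B"
  proof (rule All.IH)
    fix Qs v w
    assume v: "v \<in> fv_fm A" "v \<notin> stack_dom Qs" and vw: "var_rel \<rho> (Qs @ {(x, y)} # Rs) v w"
    show "var_rel \<rho>' (Qs @ {(x, y)} # Rs') v w"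
    proof (cases "v = x")
      case True
      with v(2) vw show ?thesis by (auto simp: var_rel_append_bound)
    next
      case False
      with v have "v \<in> fv_fm (All x A)" "v \<notin> stack_dom (Qs @ [{(x, y)}])" by auto
      moreover from vw have "var_rel \<rho> ((Qs @ [{(x, y)}]) @ Rs) v w" by simp
      ultimately have "var_rel \<rho>' ((Qs @ [{(x, y)}]) @ Rs') v w" by (rule All.prems)
      then show ?thesis by simp
    qed
  qed
  then show ?case by (rule alpha_rel.All)
qed

lemma alpha_rel_mono:
  "alpha_rel \<rho> Rs A B \<Longrightarrow> (\<And>x y. x \<in> fv_fm A \<Longrightarrow> x \<notin> stack_dom Rs \<Longrightarrow> (x, y) \<in> \<rho> \<Longrightarrow> (x, y) \<in> \<rho>')
   \<Longrightarrow> alpha_rel \<rho>' Rs A B"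
  by (erule alpha_rel_rescope, erule var_rel_mono) auto

lemma var_rel_drop_binder:
  "var_rel \<rho> (Qs @ R # Rs) x y \<Longrightarrow> (x \<notin> stack_dom Qs \<Longrightarrow> x \<notin> Domain R)
   \<Longrightarrow> var_rel \<rho> (Qs @ Rs) x y"
proof (induction Qs)
  case Nil
  then show ?case by (auto split: if_splits)
next
  case (Cons Q Qs)
  then show ?case by (cases "x \<in> Domain Q \<or> y \<in> Range Q") simp_all
qed

lemma alpha_rel_drop_binder:
  assumes "alpha_rel \<rho> (Qs @ R # Rs) A B"
    and "\<And>x. x \<in> fv_fm A \<Longrightarrow> x \<notin> stack_dom Qs \<Longrightarrow> x \<notin> Domain R"
  shows "alpha_rel \<rho> (Qs @ Rs) A B"
  using assms(1)
proof (rule alpha_rel_rescope)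
  fix Ps x y
  assume "x \<in> fv_fm A" "x \<notin> stack_dom Ps" "var_rel \<rho> (Ps @ Qs @ R # Rs) x y"
  with assms(2) show "var_rel \<rho> (Ps @ Qs @ Rs) x y"
    using var_rel_drop_binder[of \<rho> "Ps @ Qs" R Rs x y] by simp
qed

lemma var_rel_Id_collapse:
  "var_rel Id Rs x y \<Longrightarrow> \<forall>R\<in>set Rs. R \<subseteq> graph_on UNIV \<sigma> \<Longrightarrow> (x \<notin> stack_dom Rs \<Longrightarrow> \<sigma> x = x)
   \<Longrightarrow> y = \<sigma> x"
proof (induction Rs)
  case (Cons R Rs)
  then show ?case by (cases "x \<in> Domain R \<or> y \<in> Range R") auto
qed auto

lemma var_rel_collapse:
  "var_rel Id (Qs @ Rs) x y \<Longrightarrow> \<forall>R\<in>set Rs. R \<subseteq> graph_on UNIV \<sigma>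
   \<Longrightarrow> (x \<notin> stack_dom Qs \<Longrightarrow> x \<notin> stack_dom Rs \<Longrightarrow> \<sigma> x = x)
   \<Longrightarrow> var_rel (graph_on UNIV \<sigma>) Qs x y"
proof (induction Qs)
  case Nil
  then have "y = \<sigma> x"
    using var_rel_Id_collapse[of Rs x y \<sigma>] by simp
  then show ?case by simp
next
  case (Cons Q Qs)
  then show ?case by (cases "x \<in> Domain Q \<or> y \<in> Range Q") simp_all
qed

lemma alpha_rel_collapse:
  assumes "alpha_rel Id Rs A B" and "\<forall>R\<in>set Rs. R \<subseteq> graph_on UNIV \<sigma>"
    and "\<And>x. x \<in> fv_fm A \<Longrightarrow> x \<notin> stack_dom Rs \<Longrightarrow> \<sigma> x = x"
  shows "alpha_rel (graph_on UNIV \<sigma>) [] A B"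
  using assms(1)
proof (rule alpha_rel_rescope)
  fix Qs x y
  assume x: "x \<in> fv_fm A" and xy: "var_rel Id (Qs @ Rs) x y"
  have "var_rel (graph_on UNIV \<sigma>) Qs x y"
    using xy assms(2) by (rule var_rel_collapse) (use x assms(3) in blast)
  then show "var_rel (graph_on UNIV \<sigma>) (Qs @ []) x y" by simp
qed

lemma var_rel_push_binder:
  "var_rel (graph_on UNIV \<tau>) Qs v w \<Longrightarrow> \<tau> x = z
   \<Longrightarrow> (v \<notin> stack_dom Qs \<Longrightarrow> v \<noteq> x \<Longrightarrow> \<tau> v = \<sigma> v \<and> \<sigma> v \<noteq> z)
   \<Longrightarrow> var_rel (graph_on UNIV \<sigma>) (Qs @ [{(x, z)}]) v w"
proof (induction Qs)
  case Nil
  then show ?case by (cases "v = x") auto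
next
  case (Cons Q Qs)
  then show ?case by (cases "v \<in> Domain Q \<or> w \<in> Range Q") simp_all
qed

lemma alpha_rel_push_binder:
  assumes "alpha_rel (graph_on UNIV \<tau>) [] A B" and "\<tau> x = z"
    and "\<And>v. v \<in> fv_fm A \<Longrightarrow> v \<noteq> x \<Longrightarrow> \<tau> v = \<sigma> v \<and> \<sigma> v \<noteq> z"
  shows "alpha_rel (graph_on UNIV \<sigma>) [{(x, z)}] A B"
  using assms(1)
proof (rule alpha_rel_rescope)
  fix Qs v w
  assume "v \<in> fv_fm A" "v \<notin> stack_dom Qs" "var_rel (graph_on UNIV \<tau>) (Qs @ []) v w"
  with assms(2,3) show "var_rel (graph_on UNIV \<sigma>) (Qs @ [{(x, z)}]) v w"
    by (simp add: var_rel_push_binder)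
qed

lemma var_rel_graph_ex:
  "distinct (map snd qs) \<Longrightarrow> (v \<notin> fst ` set qs \<Longrightarrow> \<sigma> v \<notin> snd ` set qs)
   \<Longrightarrow> \<exists>w. var_rel (graph_on UNIV \<sigma>) (map (\<lambda>q. {q}) qs) v w
          \<and> (w \<in> snd ` set qs \<or> v \<notin> fst ` set qs \<and> w = \<sigma> v)"
proof (induction qs)
  case (Cons q qs)
  obtain a b where q: "q = (a, b)" by fastforce
  show ?case
  proof (cases "v = a")
    case True
    with q show ?thesis by auto
  next
    case False
    with Cons.prems q have "distinct (map snd qs)" "v \<notin> fst ` set qs \<Longrightarrow> \<sigma> v \<notin> snd ` set qs"
      by auto
    with Cons.IH obtain w where w: "var_rel (graph_on UNIV \<sigma>) (map (\<lambda>q. {q}) qs) v w"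
      "w \<in> snd ` set qs \<or> v \<notin> fst ` set qs \<and> w = \<sigma> v"
      by blast
    have "w \<noteq> b" using w(2) Cons.prems False q by force
    with w False q show ?thesis by auto
  qed
qed simp

text \<open>The binders of \<open>A\<close> are renamed apart, each to a variable
  outside the range of \<open>\<sigma>\<close> on the free variables.\<close>

lemma alpha_rel_graph_ex_stack:
  "distinct (map snd qs) \<Longrightarrow> (\<And>v. v \<in> fv_fm A \<Longrightarrow> v \<notin> fst ` set qs \<Longrightarrow> \<sigma> v \<notin> snd ` set qs)
   \<Longrightarrow> \<exists>B. alpha_rel (graph_on UNIV \<sigma>) (map (\<lambda>q. {q}) qs) A B"
proof (induction A arbitrary: qs)
  case (Pred p ts)
  have "\<exists>s. rel_trm (var_rel (graph_on UNIV \<sigma>) (map (\<lambda>q. {q}) qs)) t s" if "t \<in> set ts" for t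
  proof (rule rel_trm_ex)
    fix x assume "x \<in> fv_trm t"
    with that Pred.prems(2) have "x \<notin> fst ` set qs \<Longrightarrow> \<sigma> x \<notin> snd ` set qs" by auto
    then show "\<exists>y. var_rel (graph_on UNIV \<sigma>) (map (\<lambda>q. {q}) qs) x y"
      using var_rel_graph_ex[OF Pred.prems(1)] by blast
  qed
  then obtain ss where "list_all2 (rel_trm (var_rel (graph_on UNIV \<sigma>) (map (\<lambda>q. {q}) qs))) ts ss"
    using ex_list_all2 by blast
  then show ?case by (auto intro: alpha_rel.Pred)
next
  case (Imp A1 A2)
  have "\<exists>B1. alpha_rel (graph_on UNIV \<sigma>) (map (\<lambda>q. {q}) qs) A1 B1"
    using Imp.prems(1) by (rule Imp.IH(1)) (rule Imp.prems(2), simp_all)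
  moreover have "\<exists>B2. alpha_rel (graph_on UNIV \<sigma>) (map (\<lambda>q. {q}) qs) A2 B2"
    using Imp.prems(1) by (rule Imp.IH(2)) (rule Imp.prems(2), simp_all)
  ultimately show ?case by (blast intro: alpha_rel.Imp)
next
  case (All x A)
  have "finite (snd ` set qs \<union> \<sigma> ` fv_fm A)" by (simp add: finite_fv_fm)
  then obtain b where b: "b \<notin> snd ` set qs \<union> \<sigma> ` fv_fm A"
    using ex_new_if_finite[OF infinite_UNIV_nat] by blast
  have "distinct (map snd ((x, b) # qs))" using All.prems(1) b by auto
  moreover have "\<sigma> v \<notin> snd ` set ((x, b) # qs)"
    if "v \<in> fv_fm A" and "v \<notin> fst ` set ((x, b) # qs)" for v
    using All.prems(2)[of v] that b by auto
  ultimately obtain B where "alpha_rel (graph_on UNIV \<sigma>) (map (\<lambda>q. {q}) ((x, b) # qs)) A B"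
    using All.IH by blast
  then show ?case by (auto intro: alpha_rel.All)
qed

lemma alpha_rel_graph_ex: "\<exists>B. alpha_rel (graph_on UNIV \<sigma>) [] A B"
  using alpha_rel_graph_ex_stack[of "[]" A \<sigma>] by simp

lemma alpha_rel_imps_inv:
  "alpha_rel \<rho> Rs (imps As P) C
   \<Longrightarrow> \<exists>Cs Q. C = imps Cs Q \<and> list_all2 (alpha_rel \<rho> Rs) As Cs \<and> alpha_rel \<rho> Rs P Q"
proof (induction As arbitrary: C)
  case Nil
  then show ?case by force
next
  case (Cons A As)
  from Cons.prems obtain C1 C2 where "C = Imp C1 C2" "alpha_rel \<rho> Rs A C1"
    "alpha_rel \<rho> Rs (imps As P) C2"
    by (auto elim: alpha_rel_ImpE)
  with Cons.IH show ?case by (metis imps.simps(2) list_all2_Cons)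
qed

lemma var_rel_Id_refl: "\<forall>R\<in>set Rs. R \<subseteq> Id \<Longrightarrow> var_rel Id Rs x x"
  by (induction Rs) auto

lemma alpha_rel_Id_refl: "\<forall>R\<in>set Rs. R \<subseteq> Id \<Longrightarrow> alpha_rel Id Rs A A"
proof (induction A arbitrary: Rs)
  case (Pred p ts)
  then have "list_all2 (rel_trm (var_rel Id Rs)) ts ts"
    by (auto intro!: list.rel_refl_strong rel_trm_refl var_rel_Id_refl)
  then show ?case by (rule alpha_rel.Pred)
qed (auto intro: alpha_rel.intros)

lemma alpha_fm_refl: "alpha_fm [] A A"
  by (simp add: alpha_fm_iff_alpha_rel_Id alpha_rel_Id_refl)

lemma alpha_rel_graph_refl: "(\<And>x. x \<in> fv_fm A \<Longrightarrow> \<sigma> x = x) \<Longrightarrow> alpha_rel (graph_on UNIV \<sigma>) [] A A"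
  by (rule alpha_rel_mono[OF alpha_rel_Id_refl]) auto

lemma alpha_rel_graph_Pred_unique:
  assumes "alpha_rel (graph_on UNIV \<sigma>) [] (Pred p ts) C" and "alpha_rel (graph_on UNIV \<sigma>) [] (Pred p ts) D"
  shows "C = D"
proof -
  obtain ss us where C: "C = Pred p ss" and D: "D = Pred p us"
    and "list_all2 (rel_trm (var_rel (graph_on UNIV \<sigma>) [])) ts ss"
    and "list_all2 (rel_trm (var_rel (graph_on UNIV \<sigma>) [])) ts us"
    using assms by (auto elim!: alpha_rel_PredE)
  moreover have "right_unique (list_all2 (rel_trm (var_rel (graph_on UNIV \<sigma>) [])))"
    by (intro list.right_unique_rel rel_trm_right_unique) (simp add: right_unique_def)
  ultimately show ?thesis by (auto dest: right_uniqueD)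
qed

lemma alpha_fm_alpha_rel_trans: "alpha_fm [] F G \<Longrightarrow> alpha_rel \<rho> [] F H \<Longrightarrow> alpha_rel \<rho> [] G H"
  using alpha_rel_relcomp[OF alpha_rel_converse] by (fastforce simp: alpha_fm_iff_alpha_rel_Id)

section \<open>Renaming, weakening and contraction in LJ+\<close>

definition renames_into :: "(var \<Rightarrow> var) \<Rightarrow> fm multiset \<Rightarrow> fm multiset \<Rightarrow> bool" where
  "renames_into \<sigma> \<Delta> \<Delta>' \<longleftrightarrow> (\<forall>F\<in>#\<Delta>. \<exists>F'\<in>#\<Delta>'. alpha_rel (graph_on UNIV \<sigma>) [] F F')"

lemma renames_into_subset_mset: "\<Delta> \<subseteq># \<Delta>' \<Longrightarrow> renames_into (\<lambda>x. x) \<Delta> \<Delta>'"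
proof -
  have "alpha_rel (graph_on UNIV (\<lambda>x. x)) [] F F" for F
    by (rule alpha_rel_graph_refl) simp
  then show "\<Delta> \<subseteq># \<Delta>' \<Longrightarrow> renames_into (\<lambda>x. x) \<Delta> \<Delta>'"
    unfolding renames_into_def by (meson mset_subset_eqD)
qed

lemma renames_into_add_left:
  "renames_into \<sigma> (\<Delta>1 + \<Delta>2) \<Delta>' \<longleftrightarrow> renames_into \<sigma> \<Delta>1 \<Delta>' \<and> renames_into \<sigma> \<Delta>2 \<Delta>'"
  by (auto simp: renames_into_def)

lemma renames_into_mono: "renames_into \<sigma> \<Delta> \<Delta>1 \<Longrightarrow> \<Delta>1 \<subseteq># \<Delta>2 \<Longrightarrow> renames_into \<sigma> \<Delta> \<Delta>2"
  unfolding renames_into_def by (meson mset_subset_eqD)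

lemma alpha_All_rename_bound:
  assumes A1: "alpha_rel (graph_on UNIV \<sigma>) [{(x, y)}] A A1"
    and A2: "alpha_rel (graph_on UNIV (\<sigma>(x := z))) [] A A2"
    and z: "z \<notin> fv_fm (All y A1)"
  shows "alpha_fm [] (All y A1) (All z A2)"
proof -
  have "alpha_rel (graph_on UNIV \<sigma>) [{(x, z)}] A A2"
  proof (rule alpha_rel_push_binder[OF A2])
    fix v assume v: "v \<in> fv_fm A" "v \<noteq> x"
    then have "v \<notin> stack_dom [{(x, y)}]" by simp
    from alpha_rel_fv[OF A1 v(1) this] have "\<sigma> v \<in> fv_fm (All y A1)"
      by auto
    with z v(2) show "(\<sigma>(x := z)) v = \<sigma> v \<and> \<sigma> v \<noteq> z" by auto
  qed simp
  moreover have "alpha_rel ((graph_on UNIV \<sigma>)\<inverse>) [{(y, x)}] A1 A"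
  proof -
    have "{(x, y)}\<inverse> = {(y, x)}" by auto
    with alpha_rel_converse[OF A1] show ?thesis by simp
  qed
  ultimately have "alpha_rel ((graph_on UNIV \<sigma>)\<inverse> O graph_on UNIV \<sigma>) [{(y, x)} O {(x, z)}] A1 A2"
    using alpha_rel_relcomp[of _ "[{(y, x)}]" A1 A _ "[{(x, z)}]" A2] by simp
  moreover have "{(y, x)} O {(x, z)} = {(y, z)}" by auto
  ultimately have "alpha_rel ((graph_on UNIV \<sigma>)\<inverse> O graph_on UNIV \<sigma>) [{(y, z)}] A1 A2"
    by simp
  then have "alpha_rel Id [{(y, z)}] A1 A2"
    by (rule alpha_rel_mono) auto
  then show ?thesis by (simp add: alpha_fm_iff_alpha_rel_Id alpha_rel.All)
qed

text \<open>Besides renaming, \<open>renames_into\<close> allows weakening and contraction of the context: the rules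
  of LJ+ only ask for membership of the principal formula.\<close>

theorem lj_renames_into:
  "lj \<Delta> E h \<Longrightarrow> renames_into \<sigma> \<Delta> \<Delta>' \<Longrightarrow> alpha_rel (graph_on UNIV \<sigma>) [] E E' \<Longrightarrow> lj \<Delta>' E' h"
proof (induction arbitrary: \<sigma> \<Delta>' E' rule: lj.induct)
  case (L_imp F \<Delta> As p ts hs)
  obtain F' where F': "F' \<in># \<Delta>'" "alpha_rel (graph_on UNIV \<sigma>) [] F F'"
    using L_imp.prems(1) L_imp.hyps(1) unfolding renames_into_def by blast
  from alpha_fm_alpha_rel_trans[OF L_imp.hyps(2) F'(2)] obtain Cs Q where
    F'_eq: "F' = imps Cs Q" and Cs: "list_all2 (alpha_rel (graph_on UNIV \<sigma>) []) As Cs"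
    and Q: "alpha_rel (graph_on UNIV \<sigma>) [] (Pred p ts) Q"
    by (blast dest: alpha_rel_imps_inv)
  have "Q = E'" using alpha_rel_graph_Pred_unique[OF Q L_imp.prems(2)] .
  moreover obtain ss where E': "E' = Pred p ss"
    using L_imp.prems(2) by (auto elim: alpha_rel_PredE)
  ultimately have "alpha_fm [] F' (imps Cs (Pred p ss))" using F'_eq alpha_fm_refl by simp
  moreover have "length hs = length Cs" using L_imp.hyps(3) Cs by (simp add: list_all2_lengthD)
  moreover have "\<forall>i<length Cs. lj \<Delta>' (Cs ! i) (hs ! i)"
  proof (intro allI impI)
    fix i assume "i < length Cs"
    with Cs have "i < length As" "alpha_rel (graph_on UNIV \<sigma>) [] (As ! i) (Cs ! i)"
      by (auto simp: list_all2_conv_all_nth)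
    with L_imp.IH L_imp.prems(1) show "lj \<Delta>' (Cs ! i) (hs ! i)" by blast
  qed
  ultimately show ?case unfolding E' by (rule lj.L_imp[OF F'(1)])
next
  case (R_all \<Delta> A n x B)
  from alpha_fm_alpha_rel_trans[OF R_all.hyps(3) R_all.prems(2)] obtain y A1
    where E': "E' = All y A1" and A1: "alpha_rel (graph_on UNIV \<sigma>) [{(x, y)}] A A1"
    by (auto elim: alpha_rel_AllE)
  have "finite (fv_mset \<Delta>' \<union> fv_fm E')" by (simp add: finite_fv_mset finite_fv_fm)
  then obtain z where z: "z \<notin> fv_mset \<Delta>' \<union> fv_fm E'"
    using ex_new_if_finite[OF infinite_UNIV_nat] by blast
  obtain A2 where A2: "alpha_rel (graph_on UNIV (\<sigma>(x := z))) [] A A2"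
    using alpha_rel_graph_ex by blast
  have "renames_into (\<sigma>(x := z)) \<Delta> \<Delta>'"
    unfolding renames_into_def
  proof
    fix F assume F: "F \<in># \<Delta>"
    with R_all.prems(1) obtain F' where F': "F' \<in># \<Delta>'" "alpha_rel (graph_on UNIV \<sigma>) [] F F'"
      unfolding renames_into_def by blast
    from F R_all.hyps(2) have "x \<notin> fv_fm F" unfolding fv_mset_def by auto
    from F'(2) have "alpha_rel (graph_on UNIV (\<sigma>(x := z))) [] F F'"
      by (rule alpha_rel_mono) (use \<open>x \<notin> fv_fm F\<close> in auto)
    with F'(1) show "\<exists>F'\<in>#\<Delta>'. alpha_rel (graph_on UNIV (\<sigma>(x := z))) [] F F'"
      by blast
  qed
  then have "lj \<Delta>' A2 n" using A2 by (rule R_all.IH)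
  moreover have "alpha_fm [] E' (All z A2)"
    unfolding E' using A1 A2 z E' by (intro alpha_All_rename_bound) auto
  ultimately show ?case using z by (blast intro: lj.R_all)
next
  case (R_imp A \<Delta> B n C)
  from alpha_fm_alpha_rel_trans[OF R_imp.hyps(2) R_imp.prems(2)] obtain A' B'
    where E': "E' = Imp A' B'" and "alpha_rel (graph_on UNIV \<sigma>) [] A A'"
      and B': "alpha_rel (graph_on UNIV \<sigma>) [] B B'"
    by (auto elim: alpha_rel_ImpE)
  with R_imp.prems(1) have "renames_into \<sigma> (add_mset A \<Delta>) (add_mset A' \<Delta>')"
    unfolding renames_into_def by auto
  then have "lj (add_mset A' \<Delta>') B' n" using B' by (rule R_imp.IH)
  moreover have "alpha_fm [] E' (Imp A' B')" using E' alpha_fm_refl by simp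
  ultimately show ?case by (rule lj.R_imp)
qed

lemma rel_mset_ex_right: "rel_mset R M N \<Longrightarrow> a \<in># M \<Longrightarrow> \<exists>b\<in>#N. R a b"
  by (drule multiset.set_transfer[THEN rel_funD]) (auto simp: rel_set_def)

lemma rel_mset_relcompp: "rel_mset R L M \<Longrightarrow> rel_mset S M N \<Longrightarrow> rel_mset (R OO S) L N"
  by (auto simp: multiset.rel_compp)

inductive alpha_item_mset :: "(var \<times> var) set list \<Rightarrow> item \<Rightarrow> item \<Rightarrow> bool" where
  Fm: "alpha_rel Id Rs A B \<Longrightarrow> alpha_item_mset Rs (Fm A) (Fm B)"
| Brk: "bij_betw f (fset V) (fset W) \<Longrightarrow> rel_mset (alpha_item_mset (graph_on (fset V) f # Rs)) \<Gamma> \<Delta>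
    \<Longrightarrow> alpha_item_mset Rs (Brk V \<Gamma>) (Brk W \<Delta>)"

inductive_cases alpha_item_mset_FmE: "alpha_item_mset Rs (Fm A) J"
inductive_cases alpha_item_mset_BrkE: "alpha_item_mset Rs (Brk V \<Gamma>) J"

lemma alpha_item_imp_alpha_item_mset: "alpha_item Rs I J \<Longrightarrow> alpha_item_mset Rs I J"
proof (induction rule: alpha_item.induct)
  case (1 Rs A B)
  then show ?case by (simp add: alpha_item_mset.Fm alpha_fm_iff_alpha_rel_Id)
next
  case (2 f V W xs ys Rs)
  then have "list_all2 (alpha_item_mset (graph_on (fset V) f # Rs)) xs ys"
    by (simp add: list_all2_conv_all_nth)
  then have "rel_mset (alpha_item_mset (graph_on (fset V) f # Rs)) (mset xs) (mset ys)"
    unfolding rel_mset_def by blast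
  with 2(1) show ?case by (rule alpha_item_mset.Brk)
qed

lemma alpha_ctx_imp_rel_mset: "alpha_ctx \<Gamma> \<Gamma>0 \<Longrightarrow> rel_mset (alpha_item_mset []) \<Gamma> \<Gamma>0"
  unfolding alpha_ctx_def rel_mset_def using alpha_item_imp_alpha_item_mset list_all2_mono by metis

lemma graph_on_inv_into: "bij_betw f V W \<Longrightarrow> graph_on W (inv_into V f) = (graph_on V f)\<inverse>"
  by (auto simp: bij_betw_def image_iff)

lemma alpha_item_mset_converse: "alpha_item_mset Rs I J \<Longrightarrow> alpha_item_mset (map converse Rs) J I"
proof (induction rule: alpha_item_mset.induct)
  case (Fm Rs A B)
  then have "alpha_rel (Id\<inverse>) (map converse Rs) B A" by (rule alpha_rel_converse)
  then show ?case by (simp add: alpha_item_mset.Fm)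
next
  case (Brk f V W Rs \<Gamma> \<Delta>)
  let ?g = "inv_into (fset V) f"
  from Brk.IH have "rel_mset (\<lambda>b a. alpha_item_mset (map converse (graph_on (fset V) f # Rs)) b a) \<Delta> \<Gamma>"
    by (subst multiset.rel_flip[symmetric]) (auto elim: multiset.rel_mono_strong)
  then have "rel_mset (alpha_item_mset (graph_on (fset W) ?g # map converse Rs)) \<Delta> \<Gamma>"
    using graph_on_inv_into[OF Brk.hyps(1)] by simp
  with bij_betw_inv_into[OF Brk.hyps(1)] show ?case by (rule alpha_item_mset.Brk)
qed

lemma graph_on_relcomp: "bij_betw f V W \<Longrightarrow> graph_on V f O graph_on W g = graph_on V (g \<circ> f)"
  unfolding bij_betw_def by auto

lemma alpha_item_mset_relcomp:
  "alpha_item_mset Rs I J \<Longrightarrow> alpha_item_mset Ss J K \<Longrightarrow> composable Rs Ss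
   \<Longrightarrow> alpha_item_mset (map2 (O) Rs Ss) I K"
proof (induction arbitrary: Ss K rule: alpha_item_mset.induct)
  case (Fm Rs A B)
  from Fm.prems obtain C where K: "K = Fm C" and "alpha_rel Id Ss B C"
    by (auto elim: alpha_item_mset_FmE)
  with Fm.hyps Fm.prems(2) have "alpha_rel (Id O Id) (map2 (O) Rs Ss) A C"
    by (blast intro: alpha_rel_relcomp)
  then show ?case unfolding K by (simp add: alpha_item_mset.Fm)
next
  case (Brk f V W Rs \<Gamma> \<Delta>)
  from Brk.prems(1) obtain g U \<Theta> where K: "K = Brk U \<Theta>" and g: "bij_betw g (fset W) (fset U)"
    and \<Theta>: "rel_mset (alpha_item_mset (graph_on (fset W) g # Ss)) \<Delta> \<Theta>"
    by (auto elim: alpha_item_mset_BrkE)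
  have "Range (graph_on (fset V) f) = Domain (graph_on (fset W) g)"
    using Brk.hyps(1) by (simp add: bij_betw_def)
  with Brk.prems(2) have composable_layers: "composable (graph_on (fset V) f # Rs) (graph_on (fset W) g # Ss)"
    by simp
  have "rel_mset (alpha_item_mset (map2 (O) (graph_on (fset V) f # Rs) (graph_on (fset W) g # Ss))) \<Gamma> \<Theta>"
    using rel_mset_relcompp[OF Brk.IH \<Theta>] by (rule multiset.rel_mono_strong) (use composable_layers in blast)
  then have "rel_mset (alpha_item_mset (graph_on (fset V) (g \<circ> f) # map2 (O) Rs Ss)) \<Gamma> \<Theta>"
    by (simp add: graph_on_relcomp[OF Brk.hyps(1)])
  with bij_betw_trans[OF Brk.hyps(1) g] show ?case unfolding K by (rule alpha_item_mset.Brk)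
qed

lemma alpha_item_mset_fv:
  "alpha_item_mset Rs I J \<Longrightarrow> x \<in> fv_item I \<Longrightarrow> x \<notin> stack_dom Rs
   \<Longrightarrow> x \<in> fv_item J \<and> x \<notin> stack_ran Rs"
proof (induction arbitrary: x rule: alpha_item_mset.induct)
  case (Fm Rs A B)
  with alpha_rel_fv[OF Fm.hyps] show ?case by fastforce
next
  case (Brk f V W Rs \<Gamma> \<Delta>)
  from Brk.prems(1) obtain I where I: "I \<in># \<Gamma>" "x \<in> fv_item I" "x \<notin> fset V" by auto
  with Brk.prems(2) have "x \<notin> stack_dom (graph_on (fset V) f # Rs)" by simp
  moreover obtain J where "J \<in># \<Delta>" and "\<forall>y. y \<in> fv_item I
      \<longrightarrow> y \<notin> stack_dom (graph_on (fset V) f # Rs)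
      \<longrightarrow> y \<in> fv_item J \<and> y \<notin> stack_ran (graph_on (fset V) f # Rs)"
    using rel_mset_ex_right[OF Brk.IH I(1)] by blast
  ultimately have "J \<in># \<Delta>" "x \<in> fv_item J" "x \<notin> stack_ran (graph_on (fset V) f # Rs)"
    using I(2) by blast+
  moreover have "f ` fset V = fset W" using Brk.hyps(1) by (simp add: bij_betw_def)
  ultimately show ?case by auto
qed

lemma alpha_item_mset_drop_binder:
  "alpha_item_mset (Qs @ R # Rs) I J \<Longrightarrow> (\<And>x. x \<in> fv_item I \<Longrightarrow> x \<notin> stack_dom Qs \<Longrightarrow> x \<notin> Domain R)
   \<Longrightarrow> alpha_item_mset (Qs @ Rs) I J"
proof (induction "Qs @ R # Rs" I J arbitrary: Qs rule: alpha_item_mset.induct)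
  case (Fm A B)
  from Fm.hyps have "alpha_rel Id (Qs @ Rs) A B"
    by (rule alpha_rel_drop_binder) (use Fm.prems in simp)
  then show ?case by (rule alpha_item_mset.Fm)
next
  case (Brk f V W \<Gamma> \<Delta>)
  let ?L = "graph_on (fset V) f"
  have "rel_mset (alpha_item_mset (?L # Qs @ Rs)) \<Gamma> \<Delta>"
    using Brk.hyps(2)
  proof (rule multiset.rel_mono_strong)
    fix a b
    assume "a \<in># \<Gamma>" and "alpha_item_mset (?L # Qs @ R # Rs) a b \<and> (\<forall>Qs'. ?L # Qs @ R # Rs = Qs' @ R # Rs
      \<longrightarrow> (\<forall>x. x \<in> fv_item a \<longrightarrow> x \<notin> stack_dom Qs' \<longrightarrow> x \<notin> Domain R) \<longrightarrow> alpha_item_mset (Qs' @ Rs) a b)"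
    with Brk.prems show "alpha_item_mset (?L # Qs @ Rs) a b"
      by (auto dest!: spec[of _ "?L # Qs"])
  qed
  with Brk.hyps(1) show ?case by (rule alpha_item_mset.Brk)
qed

lemma in_sum_mset_image: "x \<in># sum_mset (image_mset g M) \<longleftrightarrow> (\<exists>a\<in>#M. x \<in># g a)"
  by (induction M) auto

lemma ctx_empty [simp]: "bv_ctx {#} = {#}" "fv_ctx {#} = {}" "flat_ctx {#} = {#}"
  by (simp_all add: bv_ctx_def fv_ctx_def flat_ctx_def)

lemma ctx_add_mset [simp]:
  "bv_ctx (add_mset I \<Gamma>) = bv_item I + bv_ctx \<Gamma>"
  "fv_ctx (add_mset I \<Gamma>) = fv_item I \<union> fv_ctx \<Gamma>"
  "flat_ctx (add_mset I \<Gamma>) = flat_item I + flat_ctx \<Gamma>"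
  by (simp_all add: bv_ctx_def fv_ctx_def flat_ctx_def)

lemma bv_item_Brk_eq: "bv_item (Brk V \<Gamma>) = mset_set (fset V) + bv_ctx \<Gamma>"
  by (simp add: bv_ctx_def)

lemma flat_item_Brk_eq: "flat_item (Brk V \<Gamma>) = flat_ctx \<Gamma>"
  by (simp add: flat_ctx_def)

lemma fv_item_Brk_eq: "fv_item (Brk V \<Gamma>) = fv_ctx \<Gamma> - fset V"
  by (simp add: fv_ctx_def)

lemma in_flat_ctx: "A \<in># flat_ctx \<Gamma> \<longleftrightarrow> (\<exists>I\<in>#\<Gamma>. A \<in># flat_item I)"
  unfolding flat_ctx_def by (rule in_sum_mset_image)

lemma fv_item_subset_fv_ctx: "I \<in># \<Gamma> \<Longrightarrow> fv_item I \<subseteq> fv_ctx \<Gamma>"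
  by (auto simp: fv_ctx_def)

lemma bv_item_subset_bv_ctx: "I \<in># \<Gamma> \<Longrightarrow> bv_item I \<subseteq># bv_ctx \<Gamma>"
  by (metis ctx_add_mset(1) mset_subset_eq_add_left multi_member_split)

lemma bv_items_subset_bv_ctx: "J \<in># \<Gamma> \<Longrightarrow> bv_item I + bv_item J \<subseteq># bv_ctx (add_mset I \<Gamma>)"
  by (simp add: bv_item_subset_bv_ctx subset_mset.add_left_mono)

primrec bracket_vars :: "item \<Rightarrow> var set" where
  "bracket_vars (Fm A) = {}"
| "bracket_vars (Brk V \<Gamma>) = fset V \<union> \<Union> (set_mset (image_mset bracket_vars \<Gamma>))"

lemma bracket_vars_subset_bv_item: "bracket_vars I \<subseteq> set_mset (bv_item I)"
proof (induction I)
  case (Brk V \<Gamma>)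
  then show ?case by (fastforce simp: in_sum_mset_image)
qed simp

lemma bracket_vars_subset_bv_ctx: "I \<in># \<Gamma> \<Longrightarrow> bracket_vars I \<subseteq> set_mset (bv_ctx \<Gamma>)"
  using bracket_vars_subset_bv_item bv_item_subset_bv_ctx by (fastforce dest: mset_subset_eqD)

lemma fv_flat_item: "A \<in># flat_item I \<Longrightarrow> fv_fm A \<subseteq> fv_item I \<union> bracket_vars I"
proof (induction I)
  case (Brk V \<Gamma>)
  then obtain J where "J \<in># \<Gamma>" "A \<in># flat_item J"
    by (auto simp: in_sum_mset_image)
  with Brk.IH have "fv_fm A \<subseteq> fv_item J \<union> bracket_vars J" by blast
  with \<open>J \<in># \<Gamma>\<close> show ?case by auto
qed simp

definition distinct_mset :: "'a multiset \<Rightarrow> bool" where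
  "distinct_mset M \<longleftrightarrow> (\<forall>x. count M x \<le> 1)"

lemma distinct_mset_mono: "M \<subseteq># N \<Longrightarrow> distinct_mset N \<Longrightarrow> distinct_mset M"
  unfolding distinct_mset_def by (meson le_trans mset_subset_eq_count)

lemma distinct_mset_add_disjoint: "distinct_mset (M + N) \<Longrightarrow> set_mset M \<inter> set_mset N = {}"
proof (rule ccontr)
  assume "distinct_mset (M + N)" and "set_mset M \<inter> set_mset N \<noteq> {}"
  then obtain x where "x \<in># M" "x \<in># N" "count (M + N) x \<le> 1"
    unfolding distinct_mset_def by blast
  then have "0 < count M x" "0 < count N x" "count M x + count N x \<le> 1" by auto
  then show False by linarith
qed

lemma disjoint_bv_item:
  assumes "distinct_mset (bv_ctx (add_mset I \<Gamma>))" and "J \<in># \<Gamma>"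
  shows "set_mset (bv_item I) \<inter> set_mset (bv_item J) = {}"
proof -
  from assms have "distinct_mset (bv_item I + bv_item J)"
    using bv_items_subset_bv_ctx distinct_mset_mono by blast
  then show ?thesis by (rule distinct_mset_add_disjoint)
qed

lemma disjoint_bracket_vars:
  "distinct_mset (bv_ctx (add_mset I \<Gamma>)) \<Longrightarrow> J \<in># \<Gamma> \<Longrightarrow> bracket_vars I \<inter> bracket_vars J = {}"
  using disjoint_bv_item bracket_vars_subset_bv_item by blast

section \<open>One renaming for all brackets\<close>

text \<open>In a context whose bound variables are pairwise distinct, the bijections of all brackets glue
  to a single renaming \<open>\<sigma>\<close>, which then maps the flattening of one side into that of the other.\<close>

inductive alpha_item_by :: "(var \<Rightarrow> var) \<Rightarrow> (var \<times> var) set list \<Rightarrow> item \<Rightarrow> item \<Rightarrow> bool"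
  for \<sigma> where
  Fm: "alpha_rel Id Rs A B \<Longrightarrow> alpha_item_by \<sigma> Rs (Fm A) (Fm B)"
| Brk: "bij_betw \<sigma> (fset V) (fset W) \<Longrightarrow> rel_mset (alpha_item_by \<sigma> (graph_on (fset V) \<sigma> # Rs)) \<Gamma> \<Delta>
    \<Longrightarrow> alpha_item_by \<sigma> Rs (Brk V \<Gamma>) (Brk W \<Delta>)"

lemma alpha_item_by_cong:
  "alpha_item_by \<sigma> Rs I J \<Longrightarrow> (\<And>x. x \<in> bracket_vars I \<Longrightarrow> \<sigma>' x = \<sigma> x) \<Longrightarrow> alpha_item_by \<sigma>' Rs I J"
proof (induction rule: alpha_item_by.induct)
  case (Fm Rs A B)
  then show ?case by (simp add: alpha_item_by.Fm)
next
  case (Brk V W Rs \<Gamma> \<Delta>)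
  then have eq: "\<And>x. x \<in> fset V \<Longrightarrow> \<sigma>' x = \<sigma> x" by simp
  then have "graph_on (fset V) \<sigma>' = graph_on (fset V) \<sigma>" by force
  moreover have "rel_mset (alpha_item_by \<sigma>' (graph_on (fset V) \<sigma> # Rs)) \<Gamma> \<Delta>"
    using Brk.IH by (rule multiset.rel_mono_strong) (use Brk.prems in fastforce)
  moreover have "bij_betw \<sigma>' (fset V) (fset W)"
    using Brk.hyps(1) bij_betw_cong[of "fset V" \<sigma>' \<sigma> "fset W", OF eq] by simp
  ultimately show ?case by (simp add: alpha_item_by.Brk)
qed

lemma rel_mset_alpha_item_by_glue:
  assumes "rel_mset (\<lambda>a b. \<exists>\<sigma>. alpha_item_by \<sigma> Rs a b \<and> (\<forall>x. x \<notin> bracket_vars a \<longrightarrow> \<sigma> x = x)) \<Gamma> \<Delta>"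
    and "distinct_mset (bv_ctx \<Gamma>)"
  shows "\<exists>\<sigma>. rel_mset (alpha_item_by \<sigma> Rs) \<Gamma> \<Delta> \<and> (\<forall>x. x \<notin> \<Union> (bracket_vars ` set_mset \<Gamma>) \<longrightarrow> \<sigma> x = x)"
  using assms
proof (induction \<Gamma> arbitrary: \<Delta>)
  case empty
  then show ?case by (intro exI[of _ id]) simp
next
  case (add a M)
  from msed_rel_invL[OF add.prems(1)] obtain b N \<sigma>a where \<Delta>: "\<Delta> = add_mset b N"
    and a: "alpha_item_by \<sigma>a Rs a b" "\<forall>x. x \<notin> bracket_vars a \<longrightarrow> \<sigma>a x = x"
    and N: "rel_mset (\<lambda>a b. \<exists>\<sigma>. alpha_item_by \<sigma> Rs a b \<and> (\<forall>x. x \<notin> bracket_vars a \<longrightarrow> \<sigma> x = x)) M N"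
    by blast
  from add.prems(2) have "distinct_mset (bv_ctx M)"
    by (rule distinct_mset_mono[rotated]) simp
  with N add.IH obtain \<sigma>M where M: "rel_mset (alpha_item_by \<sigma>M Rs) M N"
    "\<forall>x. x \<notin> \<Union> (bracket_vars ` set_mset M) \<longrightarrow> \<sigma>M x = x"
    by blast
  define \<sigma> where "\<sigma> x = (if x \<in> bracket_vars a then \<sigma>a x else \<sigma>M x)" for x
  have "alpha_item_by \<sigma> Rs a b"
    using a(1) by (rule alpha_item_by_cong) (simp add: \<sigma>_def)
  moreover have "rel_mset (alpha_item_by \<sigma> Rs) M N"
    using M(1)
  proof (rule multiset.rel_mono_strong)
    fix c d assume "c \<in># M" and "alpha_item_by \<sigma>M Rs c d"
    moreover from disjoint_bracket_vars[OF add.prems(2) \<open>c \<in># M\<close>]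
    have "\<sigma> x = \<sigma>M x" if "x \<in> bracket_vars c" for x
      using that by (auto simp: \<sigma>_def)
    ultimately show "alpha_item_by \<sigma> Rs c d" by (blast intro: alpha_item_by_cong)
  qed
  ultimately have "rel_mset (alpha_item_by \<sigma> Rs) (add_mset a M) \<Delta>"
    unfolding \<Delta> by (rule rel_mset_Plus)
  moreover have "\<forall>x. x \<notin> \<Union> (bracket_vars ` set_mset (add_mset a M)) \<longrightarrow> \<sigma> x = x"
    using M(2) by (simp add: \<sigma>_def)
  ultimately show ?case by blast
qed

lemma alpha_item_mset_imp_by:
  "alpha_item_mset Rs I J \<Longrightarrow> distinct_mset (bv_item I)
   \<Longrightarrow> \<exists>\<sigma>. alpha_item_by \<sigma> Rs I J \<and> (\<forall>x. x \<notin> bracket_vars I \<longrightarrow> \<sigma> x = x)"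
proof (induction rule: alpha_item_mset.induct)
  case (Fm Rs A B)
  then show ?case by (intro exI[of _ id]) (simp add: alpha_item_by.Fm)
next
  case (Brk f V W Rs \<Gamma> \<Delta>)
  let ?L = "graph_on (fset V) f # Rs"
  have distinct: "distinct_mset (mset_set (fset V) + bv_ctx \<Gamma>)"
    using Brk.prems by (simp only: bv_item_Brk_eq)
  then have distinct_\<Gamma>: "distinct_mset (bv_ctx \<Gamma>)"
    by (rule distinct_mset_mono[rotated]) simp
  have "rel_mset (\<lambda>a b. \<exists>\<sigma>. alpha_item_by \<sigma> ?L a b \<and> (\<forall>x. x \<notin> bracket_vars a \<longrightarrow> \<sigma> x = x)) \<Gamma> \<Delta>"
    using Brk.IH
  proof (rule multiset.rel_mono_strong)
    fix a b
    assume "a \<in># \<Gamma>" and "alpha_item_mset ?L a b \<and> (distinct_mset (bv_item a)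
      \<longrightarrow> (\<exists>\<sigma>. alpha_item_by \<sigma> ?L a b \<and> (\<forall>x. x \<notin> bracket_vars a \<longrightarrow> \<sigma> x = x)))"
    moreover have "distinct_mset (bv_item a)"
      using bv_item_subset_bv_ctx[OF \<open>a \<in># \<Gamma>\<close>] distinct_\<Gamma> by (rule distinct_mset_mono)
    ultimately show "\<exists>\<sigma>. alpha_item_by \<sigma> ?L a b \<and> (\<forall>x. x \<notin> bracket_vars a \<longrightarrow> \<sigma> x = x)"
      by blast
  qed
  from rel_mset_alpha_item_by_glue[OF this distinct_\<Gamma>] obtain \<sigma>0
    where \<sigma>0: "rel_mset (alpha_item_by \<sigma>0 ?L) \<Gamma> \<Delta>"
      "\<forall>x. x \<notin> \<Union> (bracket_vars ` set_mset \<Gamma>) \<longrightarrow> \<sigma>0 x = x"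
    by blast
  define \<sigma> where "\<sigma> x = (if x \<in> fset V then f x else \<sigma>0 x)" for x
  have V_disjoint: "bracket_vars a \<inter> fset V = {}" if "a \<in># \<Gamma>" for a
    using bracket_vars_subset_bv_ctx[OF that] distinct_mset_add_disjoint[OF distinct] by auto
  have "rel_mset (alpha_item_by \<sigma> ?L) \<Gamma> \<Delta>"
    using \<sigma>0(1)
  proof (rule multiset.rel_mono_strong)
    fix a b assume a: "a \<in># \<Gamma>" and "alpha_item_by \<sigma>0 ?L a b"
    from this(2) show "alpha_item_by \<sigma> ?L a b"
      by (rule alpha_item_by_cong) (use V_disjoint[OF a] in \<open>auto simp: \<sigma>_def\<close>)
  qed
  moreover have "graph_on (fset V) \<sigma> = graph_on (fset V) f" by (force simp: \<sigma>_def)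
  moreover have "bij_betw \<sigma> (fset V) (fset W)"
    using Brk.hyps(1) bij_betw_cong[of "fset V" \<sigma> f "fset W"] by (simp add: \<sigma>_def)
  ultimately have "alpha_item_by \<sigma> Rs (Brk V \<Gamma>) (Brk W \<Delta>)"
    by (simp add: alpha_item_by.Brk)
  moreover have "\<forall>x. x \<notin> bracket_vars (Brk V \<Gamma>) \<longrightarrow> \<sigma> x = x"
    using \<sigma>0(2) by (simp add: \<sigma>_def)
  ultimately show ?case by blast
qed

lemma rel_mset_alpha_item_mset_imp_by:
  assumes "rel_mset (alpha_item_mset Rs) \<Gamma> \<Delta>" and "distinct_mset (bv_ctx \<Gamma>)"
  shows "\<exists>\<sigma>. rel_mset (alpha_item_by \<sigma> Rs) \<Gamma> \<Delta> \<and> (\<forall>x. x \<notin># bv_ctx \<Gamma> \<longrightarrow> \<sigma> x = x)"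
proof -
  have "rel_mset (\<lambda>a b. \<exists>\<sigma>. alpha_item_by \<sigma> Rs a b \<and> (\<forall>x. x \<notin> bracket_vars a \<longrightarrow> \<sigma> x = x)) \<Gamma> \<Delta>"
    using assms(1)
  proof (rule multiset.rel_mono_strong)
    fix a b assume "a \<in># \<Gamma>" and "alpha_item_mset Rs a b"
    moreover have "distinct_mset (bv_item a)"
      using bv_item_subset_bv_ctx[OF \<open>a \<in># \<Gamma>\<close>] assms(2) by (rule distinct_mset_mono)
    ultimately show "\<exists>\<sigma>. alpha_item_by \<sigma> Rs a b \<and> (\<forall>x. x \<notin> bracket_vars a \<longrightarrow> \<sigma> x = x)"
      by (blast intro: alpha_item_mset_imp_by)
  qed
  from rel_mset_alpha_item_by_glue[OF this assms(2)] obtain \<sigma>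
    where "rel_mset (alpha_item_by \<sigma> Rs) \<Gamma> \<Delta>" "\<forall>x. x \<notin> \<Union> (bracket_vars ` set_mset \<Gamma>) \<longrightarrow> \<sigma> x = x"
    by blast
  moreover have "\<Union> (bracket_vars ` set_mset \<Gamma>) \<subseteq> set_mset (bv_ctx \<Gamma>)"
    using bracket_vars_subset_bv_ctx by blast
  ultimately show ?thesis by blast
qed

lemma alpha_item_by_flat:
  "alpha_item_by \<sigma> Rs I J \<Longrightarrow> \<forall>R\<in>set Rs. R \<subseteq> graph_on UNIV \<sigma>
   \<Longrightarrow> (\<And>x. x \<in> fv_item I \<Longrightarrow> x \<notin> stack_dom Rs \<Longrightarrow> \<sigma> x = x)
   \<Longrightarrow> A \<in># flat_item I \<Longrightarrow> \<exists>B\<in>#flat_item J. alpha_rel (graph_on UNIV \<sigma>) [] A B"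
proof (induction arbitrary: A rule: alpha_item_by.induct)
  case (Fm Rs A' B)
  then have "alpha_rel (graph_on UNIV \<sigma>) [] A' B"
    by (intro alpha_rel_collapse[of Rs]) simp_all
  with Fm.prems(3) show ?case by simp
next
  case (Brk V W Rs \<Gamma> \<Delta>)
  let ?L = "graph_on (fset V) \<sigma> # Rs"
  from Brk.prems(3) obtain a where a: "a \<in># \<Gamma>" "A \<in># flat_item a"
    by (auto simp: in_sum_mset_image)
  from rel_mset_ex_right[OF Brk.IH a(1)] obtain b where b: "b \<in># \<Delta>"
    and IH: "(\<forall>R\<in>set ?L. R \<subseteq> graph_on UNIV \<sigma>) \<longrightarrow>
      (\<forall>x. x \<in> fv_item a \<longrightarrow> x \<notin> stack_dom ?L \<longrightarrow> \<sigma> x = x) \<longrightarrow>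
      (\<forall>A. A \<in># flat_item a \<longrightarrow> (\<exists>B\<in>#flat_item b. alpha_rel (graph_on UNIV \<sigma>) [] A B))"
    by blast
  have "\<forall>R\<in>set ?L. R \<subseteq> graph_on UNIV \<sigma>" using Brk.prems(1) by auto
  moreover have "\<forall>x. x \<in> fv_item a \<longrightarrow> x \<notin> stack_dom ?L \<longrightarrow> \<sigma> x = x"
    using Brk.prems(2) a(1) by auto
  ultimately obtain B where "B \<in># flat_item b" "alpha_rel (graph_on UNIV \<sigma>) [] A B"
    using IH a(2) by blast
  with b show ?case by (auto simp: in_sum_mset_image)
qed

section \<open>Cleaning steps on fresh variants\<close>

declare bv_item.simps(2) [simp del] flat_item.simps(2) [simp del] fv_item.simps(2) [simp del]
declare bv_item_Brk_eq [simp] flat_item_Brk_eq [simp] fv_item_Brk_eq [simp]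

inductive clean1_variant :: "(var \<times> var) set list \<Rightarrow> ljb_ctx \<Rightarrow> ljb_ctx \<Rightarrow> bool" where
  push_out: "clean1_variant Rs (add_mset (Brk V (add_mset I \<Gamma>)) \<Xi>) (add_mset I (add_mset (Brk V \<Gamma>) \<Xi>))"
| empty_brk: "clean1_variant Rs (add_mset (Brk V {#}) \<Xi>) \<Xi>"
| dup: "alpha_item_mset Rs I I1 \<Longrightarrow> alpha_item_mset Rs I I2
    \<Longrightarrow> clean1_variant Rs (add_mset I1 (add_mset I2 \<Xi>)) (add_mset I1 \<Xi>)"
| inside: "clean1_variant (graph_on (fset V) f # Rs) \<Gamma> \<Gamma>' \<Longrightarrow> bij_betw f (fset V) (fset W)
    \<Longrightarrow> clean1_variant Rs (add_mset (Brk W \<Gamma>) \<Xi>) (add_mset (Brk W \<Gamma>') \<Xi>)"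

lemma clean1_lifts_to_variant:
  "clean1 \<Gamma> \<Gamma>' \<Longrightarrow> rel_mset (alpha_item_mset Rs) \<Gamma> \<Gamma>0
   \<Longrightarrow> \<exists>\<Gamma>1. clean1_variant Rs \<Gamma>0 \<Gamma>1 \<and> rel_mset (alpha_item_mset Rs) \<Gamma>' \<Gamma>1"
proof (induction arbitrary: Rs \<Gamma>0 rule: clean1.induct)
  case (push_out I V \<Gamma> \<Xi>)
  from msed_rel_invL[OF push_out.prems] obtain \<Xi>0 J where \<Gamma>0: "\<Gamma>0 = add_mset J \<Xi>0"
    and J: "alpha_item_mset Rs (Brk V (add_mset I \<Gamma>)) J" and \<Xi>0: "rel_mset (alpha_item_mset Rs) \<Xi> \<Xi>0"
    by blast
  from J obtain f W \<Delta> where J_eq: "J = Brk W \<Delta>" and f: "bij_betw f (fset V) (fset W)"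
    and \<Delta>: "rel_mset (alpha_item_mset (graph_on (fset V) f # Rs)) (add_mset I \<Gamma>) \<Delta>"
    by (auto elim: alpha_item_mset_BrkE)
  from msed_rel_invL[OF \<Delta>] obtain \<Delta>0 I0 where \<Delta>_eq: "\<Delta> = add_mset I0 \<Delta>0"
    and I0: "alpha_item_mset (graph_on (fset V) f # Rs) I I0"
    and \<Delta>0: "rel_mset (alpha_item_mset (graph_on (fset V) f # Rs)) \<Gamma> \<Delta>0"
    by blast
  from I0 have "alpha_item_mset ([] @ graph_on (fset V) f # Rs) I I0" by simp
  then have "alpha_item_mset ([] @ Rs) I I0"
    by (rule alpha_item_mset_drop_binder) (use push_out.hyps in auto)
  moreover from f \<Delta>0 have "alpha_item_mset Rs (Brk V \<Gamma>) (Brk W \<Delta>0)"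
    by (rule alpha_item_mset.Brk)
  ultimately have "rel_mset (alpha_item_mset Rs) (add_mset I (add_mset (Brk V \<Gamma>) \<Xi>))
      (add_mset I0 (add_mset (Brk W \<Delta>0) \<Xi>0))"
    using \<Xi>0 by (simp add: rel_mset_Plus)
  moreover have "clean1_variant Rs \<Gamma>0 (add_mset I0 (add_mset (Brk W \<Delta>0) \<Xi>0))"
    unfolding \<Gamma>0 J_eq \<Delta>_eq by (rule clean1_variant.push_out)
  ultimately show ?case by blast
next
  case (empty_brk V \<Xi>)
  from msed_rel_invL[OF empty_brk.prems] obtain \<Xi>0 J where \<Gamma>0: "\<Gamma>0 = add_mset J \<Xi>0"
    and J: "alpha_item_mset Rs (Brk V {#}) J" and \<Xi>0: "rel_mset (alpha_item_mset Rs) \<Xi> \<Xi>0"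
    by blast
  from J obtain W where "J = Brk W {#}"
    by (auto elim: alpha_item_mset_BrkE)
  with \<Gamma>0 have "clean1_variant Rs \<Gamma>0 \<Xi>0" by (simp add: clean1_variant.empty_brk)
  with \<Xi>0 show ?case by blast
next
  case (dup I \<Xi>)
  from msed_rel_invL[OF dup.prems] obtain \<Gamma>a I1 where \<Gamma>0: "\<Gamma>0 = add_mset I1 \<Gamma>a"
    and I1: "alpha_item_mset Rs I I1" and \<Gamma>a: "rel_mset (alpha_item_mset Rs) (add_mset I \<Xi>) \<Gamma>a"
    by blast
  from msed_rel_invL[OF \<Gamma>a] obtain \<Xi>0 I2 where \<Gamma>a_eq: "\<Gamma>a = add_mset I2 \<Xi>0"
    and I2: "alpha_item_mset Rs I I2" and \<Xi>0: "rel_mset (alpha_item_mset Rs) \<Xi> \<Xi>0"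
    by blast
  have "clean1_variant Rs \<Gamma>0 (add_mset I1 \<Xi>0)"
    unfolding \<Gamma>0 \<Gamma>a_eq using I1 I2 by (rule clean1_variant.dup)
  moreover have "rel_mset (alpha_item_mset Rs) (add_mset I \<Xi>) (add_mset I1 \<Xi>0)"
    using I1 \<Xi>0 by (rule rel_mset_Plus)
  ultimately show ?case by blast
next
  case (inside \<Gamma> \<Gamma>' V \<Xi>)
  from msed_rel_invL[OF inside.prems] obtain \<Xi>0 J where \<Gamma>0: "\<Gamma>0 = add_mset J \<Xi>0"
    and J: "alpha_item_mset Rs (Brk V \<Gamma>) J" and \<Xi>0: "rel_mset (alpha_item_mset Rs) \<Xi> \<Xi>0"
    by blast
  from J obtain f W \<Delta> where J_eq: "J = Brk W \<Delta>" and f: "bij_betw f (fset V) (fset W)"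
    and \<Delta>: "rel_mset (alpha_item_mset (graph_on (fset V) f # Rs)) \<Gamma> \<Delta>"
    by (auto elim: alpha_item_mset_BrkE)
  from inside.IH[OF \<Delta>] obtain \<Delta>1 where \<Delta>1: "clean1_variant (graph_on (fset V) f # Rs) \<Delta> \<Delta>1"
    "rel_mset (alpha_item_mset (graph_on (fset V) f # Rs)) \<Gamma>' \<Delta>1"
    by blast
  have "clean1_variant Rs \<Gamma>0 (add_mset (Brk W \<Delta>1) \<Xi>0)"
    unfolding \<Gamma>0 J_eq using \<Delta>1(1) f by (rule clean1_variant.inside)
  moreover from f \<Delta>1(2) have "alpha_item_mset Rs (Brk V \<Gamma>') (Brk W \<Delta>1)"
    by (rule alpha_item_mset.Brk)
  with \<Xi>0 have "rel_mset (alpha_item_mset Rs) (add_mset (Brk V \<Gamma>') \<Xi>) (add_mset (Brk W \<Delta>1) \<Xi>0)"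
    by (simp add: rel_mset_Plus)
  ultimately show ?case by blast
qed

lemma clean1_fv_ctx_subset: "clean1 \<Gamma> \<Gamma>' \<Longrightarrow> fv_ctx \<Gamma>' \<subseteq> fv_ctx \<Gamma>"
  by (induction rule: clean1.induct) (auto simp: fv_ctx_def)

lemma clean1_variant_bv_ctx_subset: "clean1_variant Rs \<Gamma>0 \<Gamma>1 \<Longrightarrow> bv_ctx \<Gamma>1 \<subseteq># bv_ctx \<Gamma>0"
proof (induction rule: clean1_variant.induct)
  case (inside V f Rs \<Gamma> \<Gamma>' W \<Xi>)
  then show ?case by (simp add: bv_ctx_def)
qed (simp_all add: bv_item_Brk_eq ac_simps)

lemma clean1_variant_flat_ctx_subset: "clean1_variant Rs \<Gamma>0 \<Gamma>1 \<Longrightarrow> flat_ctx \<Gamma>1 \<subseteq># flat_ctx \<Gamma>0"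
proof (induction rule: clean1_variant.induct)
  case (inside V f Rs \<Gamma> \<Gamma>' W \<Xi>)
  then show ?case by (simp add: flat_ctx_def)
qed (simp_all add: flat_item_Brk_eq ac_simps)

definition fresh_ctx :: "ljb_ctx \<Rightarrow> bool" where
  "fresh_ctx \<Gamma> \<longleftrightarrow> distinct_mset (bv_ctx \<Gamma>) \<and> set_mset (bv_ctx \<Gamma>) \<inter> fv_ctx \<Gamma> = {}"

lemma renames_into_flat_ctx_refl:
  assumes "\<forall>x. x \<notin> S \<longrightarrow> \<sigma> x = x"
    and "\<And>J. J \<in># \<Xi> \<Longrightarrow> S \<inter> (fv_item J \<union> bracket_vars J) = {}"
  shows "renames_into \<sigma> (flat_ctx \<Xi>) (flat_ctx \<Xi>)"
  unfolding renames_into_def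
proof
  fix A assume "A \<in># flat_ctx \<Xi>"
  then obtain J where "J \<in># \<Xi>" "A \<in># flat_item J" by (auto simp: in_flat_ctx)
  with assms have "alpha_rel (graph_on UNIV \<sigma>) [] A A"
    by (intro alpha_rel_graph_refl) (use fv_flat_item in blast)
  with \<open>A \<in># flat_ctx \<Xi>\<close> show "\<exists>A'\<in>#flat_ctx \<Xi>. alpha_rel (graph_on UNIV \<sigma>) [] A A'" by blast
qed

lemma flat_ctx_renames_into_of_alpha:
  assumes "rel_mset (alpha_item_mset []) \<Gamma> \<Delta>" and "fresh_ctx \<Gamma>"
  shows "\<exists>\<sigma>. (\<forall>x. x \<notin># bv_ctx \<Gamma> \<longrightarrow> \<sigma> x = x) \<and> renames_into \<sigma> (flat_ctx \<Gamma>) (flat_ctx \<Delta>)"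
proof -
  from assms obtain \<sigma> where \<sigma>: "rel_mset (alpha_item_by \<sigma> []) \<Gamma> \<Delta>" "\<forall>x. x \<notin># bv_ctx \<Gamma> \<longrightarrow> \<sigma> x = x"
    unfolding fresh_ctx_def by (blast dest: rel_mset_alpha_item_mset_imp_by)
  have "renames_into \<sigma> (flat_ctx \<Gamma>) (flat_ctx \<Delta>)"
    unfolding renames_into_def
  proof
    fix A assume "A \<in># flat_ctx \<Gamma>"
    then obtain I where I: "I \<in># \<Gamma>" "A \<in># flat_item I" by (auto simp: in_flat_ctx)
    from rel_mset_ex_right[OF \<sigma>(1) I(1)] obtain J where J: "J \<in># \<Delta>" "alpha_item_by \<sigma> [] I J"
      by blast
    have "\<sigma> x = x" if "x \<in> fv_item I" for x
      using that fv_item_subset_fv_ctx[OF I(1)] assms(2) \<sigma>(2) unfolding fresh_ctx_def by blast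
    with alpha_item_by_flat[OF J(2) _ _ I(2)] obtain B
      where "B \<in># flat_item J" "alpha_rel (graph_on UNIV \<sigma>) [] A B"
      by auto
    with J(1) show "\<exists>B\<in>#flat_ctx \<Delta>. alpha_rel (graph_on UNIV \<sigma>) [] A B"
      by (meson in_flat_ctx)
  qed
  with \<sigma>(2) show ?thesis by blast
qed

text \<open>The two merged copies are alpha-variants under the layers \<open>R\<inverse> O R\<close>.  These are identities,
  as each \<open>R\<close> is single-valued, on variables not bound in the context, which the glued renaming
  therefore fixes.\<close>

lemma dup_flat_ctx_renames_into:
  assumes I1: "alpha_item_mset Rs I I1" and I2: "alpha_item_mset Rs I I2"
    and fresh: "fresh_ctx (add_mset I1 (add_mset I2 \<Xi>))"
    and Rs: "\<forall>R\<in>set Rs. Range R \<inter> set_mset (bv_ctx (add_mset I1 (add_mset I2 \<Xi>))) = {} \<and> single_valued R"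
  shows "\<exists>\<sigma>. (\<forall>x. x \<notin># bv_ctx (add_mset I1 (add_mset I2 \<Xi>)) \<longrightarrow> \<sigma> x = x)
    \<and> renames_into \<sigma> (flat_ctx (add_mset I1 (add_mset I2 \<Xi>))) (flat_ctx (add_mset I1 \<Xi>))"
proof -
  let ?\<Gamma>0 = "add_mset I1 (add_mset I2 \<Xi>)"
  let ?Ss = "map (\<lambda>R. R\<inverse> O R) Rs"
  from fresh have distinct: "distinct_mset (bv_ctx ?\<Gamma>0)" and disjoint: "set_mset (bv_ctx ?\<Gamma>0) \<inter> fv_ctx ?\<Gamma>0 = {}"
    unfolding fresh_ctx_def by blast+
  have "composable (map converse Rs) Rs" by (induction Rs) auto
  with alpha_item_mset_converse[OF I2] I1
  have "alpha_item_mset (map2 (O) (map converse Rs) Rs) I2 I1" by (rule alpha_item_mset_relcomp)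
  moreover have "map2 (O) (map converse Rs) Rs = ?Ss" by (induction Rs) auto
  ultimately have I21: "alpha_item_mset ?Ss I2 I1" by simp
  have "bv_item I2 \<subseteq># bv_ctx ?\<Gamma>0" by (rule bv_item_subset_bv_ctx) simp
  then have "distinct_mset (bv_item I2)" using distinct by (rule distinct_mset_mono)
  with alpha_item_mset_imp_by[OF I21] obtain \<sigma>
    where \<sigma>: "alpha_item_by \<sigma> ?Ss I2 I1" "\<forall>x. x \<notin> bracket_vars I2 \<longrightarrow> \<sigma> x = x"
    by blast
  have bracket_vars_I2: "bracket_vars I2 \<subseteq> set_mset (bv_ctx ?\<Gamma>0)"
    by (rule bracket_vars_subset_bv_ctx) simp
  have layers: "\<forall>R'\<in>set ?Ss. R' \<subseteq> graph_on UNIV \<sigma>"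
  proof (intro ballI subsetI)
    fix R' p assume "R' \<in> set ?Ss" "p \<in> R'"
    then obtain R a b b' where R: "R \<in> set Rs" "p = (b, b')" "(a, b) \<in> R" "(a, b') \<in> R" by auto
    with Rs have "b = b'" by (auto dest: single_valuedD)
    moreover from R Rs bracket_vars_I2 have "b \<notin> bracket_vars I2" by blast
    ultimately show "p \<in> graph_on UNIV \<sigma>" using \<sigma>(2) R(2) by simp
  qed
  have fixed: "\<sigma> x = x" if "x \<in> fv_item I2" and "x \<notin> stack_dom ?Ss" for x
    using that(1) disjoint bracket_vars_I2 \<sigma>(2) by auto
  have "renames_into \<sigma> (flat_item I2) (flat_item I1)"
    unfolding renames_into_def using alpha_item_by_flat[OF \<sigma>(1) layers fixed] by blast
  moreover have "renames_into \<sigma> (flat_ctx (add_mset I1 \<Xi>)) (flat_ctx (add_mset I1 \<Xi>))"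
  proof (rule renames_into_flat_ctx_refl[OF \<sigma>(2)])
    fix J assume J: "J \<in># add_mset I1 \<Xi>"
    then have "bracket_vars I2 \<inter> fv_item J = {}"
      using fv_item_subset_fv_ctx[of J ?\<Gamma>0] disjoint bracket_vars_I2 by auto
    moreover have "bracket_vars I2 \<inter> bracket_vars J = {}"
      using disjoint_bracket_vars[of I2 "add_mset I1 \<Xi>" J] distinct J
      by (simp add: add_mset_commute)
    ultimately show "bracket_vars I2 \<inter> (fv_item J \<union> bracket_vars J) = {}" by blast
  qed
  ultimately have "renames_into \<sigma> (flat_ctx ?\<Gamma>0) (flat_ctx (add_mset I1 \<Xi>))"
    by (auto simp: renames_into_add_left intro: renames_into_mono)
  with \<sigma>(2) bracket_vars_I2 show ?thesis by blast
qed

lemma fresh_ctx_Brk_contents: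
  assumes "fresh_ctx (add_mset (Brk W \<Gamma>) \<Xi>)"
  shows "fresh_ctx \<Gamma>" and "fset W \<inter> set_mset (bv_ctx \<Gamma>) = {}"
    and "bv_ctx \<Gamma> \<subseteq># bv_ctx (add_mset (Brk W \<Gamma>) \<Xi>)"
proof -
  let ?\<Gamma>0 = "add_mset (Brk W \<Gamma>) \<Xi>"
  have sub: "mset_set (fset W) + bv_ctx \<Gamma> \<subseteq># bv_ctx ?\<Gamma>0"
    using bv_item_subset_bv_ctx[of "Brk W \<Gamma>" ?\<Gamma>0] by (simp add: bv_item_Brk_eq)
  then show "bv_ctx \<Gamma> \<subseteq># bv_ctx ?\<Gamma>0"
    by (rule subset_mset.order_trans[rotated]) simp
  from sub assms have "distinct_mset (mset_set (fset W) + bv_ctx \<Gamma>)"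
    unfolding fresh_ctx_def by (blast intro: distinct_mset_mono)
  then show W: "fset W \<inter> set_mset (bv_ctx \<Gamma>) = {}"
    using distinct_mset_add_disjoint by fastforce
  have "distinct_mset (bv_ctx \<Gamma>)"
    using \<open>bv_ctx \<Gamma> \<subseteq># bv_ctx ?\<Gamma>0\<close> assms unfolding fresh_ctx_def by (blast intro: distinct_mset_mono)
  moreover have "fv_ctx \<Gamma> \<subseteq> fv_ctx ?\<Gamma>0 \<union> fset W" by (auto simp: fv_ctx_def)
  with assms W \<open>bv_ctx \<Gamma> \<subseteq># bv_ctx ?\<Gamma>0\<close> have "set_mset (bv_ctx \<Gamma>) \<inter> fv_ctx \<Gamma> = {}"
    unfolding fresh_ctx_def by (blast dest: set_mset_mono)
  ultimately show "fresh_ctx \<Gamma>" by (simp add: fresh_ctx_def)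
qed

lemma clean1_variant_renames_into:
  "clean1_variant Rs \<Gamma>0 \<Gamma>1 \<Longrightarrow> fresh_ctx \<Gamma>0
   \<Longrightarrow> \<forall>R\<in>set Rs. Range R \<inter> set_mset (bv_ctx \<Gamma>0) = {} \<and> single_valued R
   \<Longrightarrow> \<exists>\<sigma>. (\<forall>x. x \<notin># bv_ctx \<Gamma>0 \<longrightarrow> \<sigma> x = x) \<and> renames_into \<sigma> (flat_ctx \<Gamma>0) (flat_ctx \<Gamma>1)"
proof (induction rule: clean1_variant.induct)
  case (push_out Rs V I \<Gamma> \<Xi>)
  have "renames_into (\<lambda>x. x) (flat_ctx (add_mset (Brk V (add_mset I \<Gamma>)) \<Xi>))
      (flat_ctx (add_mset I (add_mset (Brk V \<Gamma>) \<Xi>)))"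
    by (rule renames_into_subset_mset) (simp add: flat_item_Brk_eq ac_simps)
  then show ?case by (intro exI[of _ "\<lambda>x. x"]) simp
next
  case (empty_brk Rs V \<Xi>)
  have "renames_into (\<lambda>x. x) (flat_ctx (add_mset (Brk V {#}) \<Xi>)) (flat_ctx \<Xi>)"
    by (rule renames_into_subset_mset) (simp add: flat_item_Brk_eq)
  then show ?case by (intro exI[of _ "\<lambda>x. x"]) simp
next
  case (dup Rs I I1 I2 \<Xi>)
  then show ?case by (rule dup_flat_ctx_renames_into)
next
  case (inside V f Rs \<Gamma> \<Gamma>' W \<Xi>)
  let ?\<Gamma>0 = "add_mset (Brk W \<Gamma>) \<Xi>"
  note inner = fresh_ctx_Brk_contents[OF inside.prems(1)]
  have "\<forall>R\<in>set (graph_on (fset V) f # Rs). Range R \<inter> set_mset (bv_ctx \<Gamma>) = {} \<and> single_valued R"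
  proof
    fix R assume "R \<in> set (graph_on (fset V) f # Rs)"
    then consider "R = graph_on (fset V) f" | "R \<in> set Rs" by auto
    then show "Range R \<inter> set_mset (bv_ctx \<Gamma>) = {} \<and> single_valued R"
    proof cases
      case 1
      with inside.hyps(2) inner(2) show ?thesis by (auto simp: bij_betw_def single_valued_def)
    next
      case 2
      with inside.prems(2) inner(3) show ?thesis by (blast dest: set_mset_mono)
    qed
  qed
  with inside.IH inner(1) obtain \<sigma> where \<sigma>: "\<forall>x. x \<notin># bv_ctx \<Gamma> \<longrightarrow> \<sigma> x = x"
    "renames_into \<sigma> (flat_ctx \<Gamma>) (flat_ctx \<Gamma>')"
    by blast
  have "renames_into \<sigma> (flat_ctx \<Xi>) (flat_ctx \<Xi>)"
  proof (rule renames_into_flat_ctx_refl[OF \<sigma>(1)])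
    fix J assume J: "J \<in># \<Xi>"
    have "set_mset (bv_ctx \<Gamma>) \<inter> fv_item J = {}"
      using inside.prems(1) inner(3) fv_item_subset_fv_ctx[of J ?\<Gamma>0] J
      unfolding fresh_ctx_def by (auto dest: set_mset_mono)
    moreover have "set_mset (bv_ctx \<Gamma>) \<inter> set_mset (bv_item J) = {}"
      using disjoint_bv_item[of "Brk W \<Gamma>" \<Xi> J] inside.prems(1) J unfolding fresh_ctx_def by auto
    then have "set_mset (bv_ctx \<Gamma>) \<inter> bracket_vars J = {}"
      using bracket_vars_subset_bv_item[of J] by blast
    ultimately show "set_mset (bv_ctx \<Gamma>) \<inter> (fv_item J \<union> bracket_vars J) = {}" by blast
  qed
  then have "renames_into \<sigma> (flat_ctx ?\<Gamma>0) (flat_ctx (add_mset (Brk W \<Gamma>') \<Xi>))"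
    using \<sigma>(2) by (auto simp: flat_item_Brk_eq renames_into_add_left intro: renames_into_mono)
  moreover have "\<forall>x. x \<notin># bv_ctx ?\<Gamma>0 \<longrightarrow> \<sigma> x = x"
    using \<sigma>(1) inner(3) by (blast dest: set_mset_mono)
  ultimately show ?case by blast
qed

lemma rel_mset_alpha_item_mset_sym:
  "rel_mset (alpha_item_mset []) \<Gamma> \<Delta> \<Longrightarrow> rel_mset (alpha_item_mset []) \<Delta> \<Gamma>"
  by (subst multiset.rel_flip[symmetric])
    (auto elim!: multiset.rel_mono_strong dest: alpha_item_mset_converse)

lemma rel_mset_alpha_item_mset_trans:
  "rel_mset (alpha_item_mset []) \<Gamma> \<Delta> \<Longrightarrow> rel_mset (alpha_item_mset []) \<Delta> \<Theta>
   \<Longrightarrow> rel_mset (alpha_item_mset []) \<Gamma> \<Theta>"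
  by (drule (1) rel_mset_relcompp)
    (auto elim!: multiset.rel_mono_strong dest: alpha_item_mset_relcomp[of "[]" _ _ "[]", simplified])

lemma fv_ctx_subset_of_rel_mset:
  assumes "rel_mset (alpha_item_mset []) \<Gamma> \<Delta>"
  shows "fv_ctx \<Gamma> \<subseteq> fv_ctx \<Delta>"
proof
  fix x assume "x \<in> fv_ctx \<Gamma>"
  then obtain I where I: "I \<in># \<Gamma>" "x \<in> fv_item I" by (auto simp: fv_ctx_def)
  from rel_mset_ex_right[OF assms I(1)] obtain J where J: "J \<in># \<Delta>" "alpha_item_mset [] I J"
    by blast
  from alpha_item_mset_fv[OF J(2) I(2)] have "x \<in> fv_item J" by simp
  with J(1) show "x \<in> fv_ctx \<Delta>" by (auto simp: fv_ctx_def)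
qed

lemma fresh_ctx_mono:
  "fresh_ctx \<Gamma>0 \<Longrightarrow> bv_ctx \<Gamma>1 \<subseteq># bv_ctx \<Gamma>0 \<Longrightarrow> fv_ctx \<Gamma>1 \<subseteq> fv_ctx \<Gamma>0 \<Longrightarrow> fresh_ctx \<Gamma>1"
  unfolding fresh_ctx_def by (blast intro: distinct_mset_mono dest: set_mset_mono)

lemma flatteningE:
  assumes "flattening \<Delta> E \<Gamma> A"
  obtains \<Gamma>0 where "rel_mset (alpha_item_mset []) \<Gamma> \<Gamma>0" and "alpha_fm [] A E" and "fresh_ctx \<Gamma>0"
    and "set_mset (bv_ctx \<Gamma>0) \<inter> fv_fm E = {}" and "\<Delta> = flat_ctx \<Gamma>0"
proof -
  from assms obtain \<Gamma>0 where "alpha_ctx \<Gamma> \<Gamma>0" "alpha_fm [] A E" "\<Delta> = flat_ctx \<Gamma>0"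
    and distinct: "distinct_mset (bv_ctx \<Gamma>0 + bv_fm E)"
    and disjoint: "set_mset (bv_ctx \<Gamma>0 + bv_fm E) \<inter> (fv_ctx \<Gamma>0 \<union> fv_fm E) = {}"
    unfolding flattening_def fresh_variant_def distinct_mset_def by blast
  moreover from distinct have "distinct_mset (bv_ctx \<Gamma>0)"
    by (rule distinct_mset_mono[rotated]) simp
  with disjoint have "fresh_ctx \<Gamma>0" by (auto simp: fresh_ctx_def)
  moreover from disjoint have "set_mset (bv_ctx \<Gamma>0) \<inter> fv_fm E = {}" by auto
  ultimately show ?thesis using that alpha_ctx_imp_rel_mset by blast
qed

lemma lj_renames_into_fixing_fv:
  assumes "lj \<Delta> E h" and "renames_into \<sigma> \<Delta> \<Delta>'" and "alpha_rel Id [] E E'"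
    and "\<And>x. x \<in> fv_fm E \<Longrightarrow> \<sigma> x = x"
  shows "lj \<Delta>' E' h"
proof -
  from assms(3) have "alpha_rel (graph_on UNIV \<sigma>) [] E E'"
    by (rule alpha_rel_mono) (use assms(4) in auto)
  with assms(1,2) show ?thesis by (rule lj_renames_into)
qed

lemma lj_flat_ctx_clean1_variant:
  assumes "clean1_variant [] \<Gamma>0 \<Gamma>1" and "fresh_ctx \<Gamma>0" and "set_mset (bv_ctx \<Gamma>0) \<inter> fv_fm E = {}"
  shows "lj (flat_ctx \<Gamma>0) E h \<longleftrightarrow> lj (flat_ctx \<Gamma>1) E h"
proof
  have refl: "alpha_rel Id [] E E" by (rule alpha_rel_Id_refl) simp
  from clean1_variant_renames_into[OF assms(1,2)] obtain \<sigma>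
    where \<sigma>: "\<forall>x. x \<notin># bv_ctx \<Gamma>0 \<longrightarrow> \<sigma> x = x" "renames_into \<sigma> (flat_ctx \<Gamma>0) (flat_ctx \<Gamma>1)"
    by auto
  show "lj (flat_ctx \<Gamma>1) E h" if "lj (flat_ctx \<Gamma>0) E h"
    using that \<sigma>(2) refl by (rule lj_renames_into_fixing_fv) (use \<sigma>(1) assms(3) in blast)
  have id_renames: "renames_into (\<lambda>x. x) (flat_ctx \<Gamma>1) (flat_ctx \<Gamma>0)"
    using assms(1) by (intro renames_into_subset_mset clean1_variant_flat_ctx_subset)
  show "lj (flat_ctx \<Gamma>0) E h" if "lj (flat_ctx \<Gamma>1) E h"
    using that id_renames refl by (rule lj_renames_into_fixing_fv) simp
qed

lemma lj_flat_ctx_alpha: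
  assumes "rel_mset (alpha_item_mset []) \<Gamma> \<Delta>" and "fresh_ctx \<Gamma>"
    and "set_mset (bv_ctx \<Gamma>) \<inter> fv_fm E = {}" and "alpha_rel Id [] E E'"
    and "lj (flat_ctx \<Gamma>) E h"
  shows "lj (flat_ctx \<Delta>) E' h"
proof -
  from flat_ctx_renames_into_of_alpha[OF assms(1,2)] obtain \<sigma>
    where \<sigma>: "\<forall>x. x \<notin># bv_ctx \<Gamma> \<longrightarrow> \<sigma> x = x" "renames_into \<sigma> (flat_ctx \<Gamma>) (flat_ctx \<Delta>)"
    by auto
  from assms(5) \<sigma>(2) assms(4) show ?thesis
    by (rule lj_renames_into_fixing_fv) (use \<sigma>(1) assms(3) in blast)
qed

lemma lj_flat_ctx_alpha_iff:
  assumes "rel_mset (alpha_item_mset []) \<Gamma> \<Delta>" and "fresh_ctx \<Gamma>" and "fresh_ctx \<Delta>"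
    and "set_mset (bv_ctx \<Gamma>) \<inter> fv_fm E = {}" and "set_mset (bv_ctx \<Delta>) \<inter> fv_fm E' = {}"
    and "alpha_fm [] E E'"
  shows "lj (flat_ctx \<Gamma>) E h \<longleftrightarrow> lj (flat_ctx \<Delta>) E' h"
proof -
  have "alpha_rel Id [] E E'" and "alpha_rel Id [] E' E"
    using assms(6) alpha_fm_alpha_rel_trans[OF assms(6), of Id E] alpha_rel_Id_refl[of "[]" E]
    by (simp_all add: alpha_fm_iff_alpha_rel_Id)
  with assms rel_mset_alpha_item_mset_sym[OF assms(1)] show ?thesis
    by (blast intro: lj_flat_ctx_alpha)
qed

lemma clean1_variant_between_flattenings:
  assumes "clean1 \<Gamma> \<Gamma>'" and "rel_mset (alpha_item_mset []) \<Gamma> \<Gamma>0" and "fresh_ctx \<Gamma>0"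
    and "rel_mset (alpha_item_mset []) \<Gamma>' \<Gamma>0'"
  obtains \<Gamma>1 where "clean1_variant [] \<Gamma>0 \<Gamma>1" and "rel_mset (alpha_item_mset []) \<Gamma>1 \<Gamma>0'"
    and "fresh_ctx \<Gamma>1" and "bv_ctx \<Gamma>1 \<subseteq># bv_ctx \<Gamma>0"
proof -
  obtain \<Gamma>1 where \<Gamma>1: "clean1_variant [] \<Gamma>0 \<Gamma>1" "rel_mset (alpha_item_mset []) \<Gamma>' \<Gamma>1"
    using clean1_lifts_to_variant[OF assms(1,2)] by blast
  have bv: "bv_ctx \<Gamma>1 \<subseteq># bv_ctx \<Gamma>0" using \<Gamma>1(1) by (rule clean1_variant_bv_ctx_subset)
  have "fv_ctx \<Gamma>1 \<subseteq> fv_ctx \<Gamma>0"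
    using fv_ctx_subset_of_rel_mset[OF rel_mset_alpha_item_mset_sym[OF \<Gamma>1(2)]]
      clean1_fv_ctx_subset[OF assms(1)] fv_ctx_subset_of_rel_mset[OF assms(2)] by blast
  with assms(3) bv have "fresh_ctx \<Gamma>1" by (rule fresh_ctx_mono)
  moreover have "rel_mset (alpha_item_mset []) \<Gamma>1 \<Gamma>0'"
    using rel_mset_alpha_item_mset_sym[OF \<Gamma>1(2)] assms(4) by (rule rel_mset_alpha_item_mset_trans)
  ultimately show ?thesis using that \<Gamma>1(1) bv by blast
qed

theorem proposition4:
  fixes \<Gamma> \<Gamma>' :: ljb_ctx and A E E' :: fm and \<Delta> \<Delta>' :: "fm multiset"
  assumes "clean1 \<Gamma> \<Gamma>'"
    and "flattening \<Delta> E \<Gamma> A"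
    and "flattening \<Delta>' E' \<Gamma>' A"
  shows "\<forall>h. lj \<Delta> E h \<longleftrightarrow> lj \<Delta>' E' h"
proof
  fix h
  obtain \<Gamma>0 where \<Gamma>0: "rel_mset (alpha_item_mset []) \<Gamma> \<Gamma>0" "alpha_fm [] A E" "fresh_ctx \<Gamma>0"
    "set_mset (bv_ctx \<Gamma>0) \<inter> fv_fm E = {}" "\<Delta> = flat_ctx \<Gamma>0"
    using assms(2) by (rule flatteningE)
  obtain \<Gamma>0' where \<Gamma>0': "rel_mset (alpha_item_mset []) \<Gamma>' \<Gamma>0'" "alpha_fm [] A E'" "fresh_ctx \<Gamma>0'"
    "set_mset (bv_ctx \<Gamma>0') \<inter> fv_fm E' = {}" "\<Delta>' = flat_ctx \<Gamma>0'"
    using assms(3) by (rule flatteningE)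
  obtain \<Gamma>1 where \<Gamma>1: "clean1_variant [] \<Gamma>0 \<Gamma>1" "rel_mset (alpha_item_mset []) \<Gamma>1 \<Gamma>0'"
    "fresh_ctx \<Gamma>1" "bv_ctx \<Gamma>1 \<subseteq># bv_ctx \<Gamma>0"
    using assms(1) \<Gamma>0(1,3) \<Gamma>0'(1) by (rule clean1_variant_between_flattenings)
  have E_E': "alpha_fm [] E E'"
    using alpha_fm_alpha_rel_trans[OF \<Gamma>0(2)] \<Gamma>0'(2) by (simp add: alpha_fm_iff_alpha_rel_Id)
  have bv_\<Gamma>1: "set_mset (bv_ctx \<Gamma>1) \<inter> fv_fm E = {}"
    using \<Gamma>0(4) \<Gamma>1(4) by (blast dest: set_mset_mono)
  have "lj (flat_ctx \<Gamma>1) E h \<longleftrightarrow> lj \<Delta>' E' h"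
    unfolding \<Gamma>0'(5) by (rule lj_flat_ctx_alpha_iff[OF \<Gamma>1(2,3) \<Gamma>0'(3) bv_\<Gamma>1 \<Gamma>0'(4) E_E'])
  with lj_flat_ctx_clean1_variant[OF \<Gamma>1(1) \<Gamma>0(3,4)] show "lj \<Delta> E h \<longleftrightarrow> lj \<Delta>' E' h"
    unfolding \<Gamma>0(5) by blast
qed

end
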